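(* Let $\mathcal S=\mathbb R^d$ with the Euclidean metric, let the target locations be pairwise distinct and the training locations pairwise distinct, and let $(S_n)_{n\ge1}$ satisfy infill asymptotics with respect to $(S^*_m)_{m=1}^M$. Assume (A2)–(A6), and let $k_N$ be the adaptive number-of-neighbors sequence for some positive $(a_t)$ with $a_t\to0$. Then $k_N\,\Psi^{N,k_N}\Lambda^N(\Psi^{N,k_N})^\top\to\Lambda^\star$ in probability, where $\Lambda^\star\in\mathbb R^{M\times M}$ is diagonal with $\Lambda^\star_{mm}=\mathrm{Var}(Y^*_m)=\rho^2(S^*_m)$.
   Context: Fixed targets $S^*_m$; deterministic training locations $(S_n)$ with real responses $Y_n$; target responses $Y^*_m$. (A2) $\exists f:\mathcal S\to\mathbb R$ with $\mathbb E[Y_n]=f(S_n)$, $\mathbb E[Y^*_m]=f(S^*_m)$, all responses mutually independent. (A3) $f$ is $L$-Lipschitz. (A4) $\exists\rho^2:\mathcal S\to[0,B_Y]$ with $\mathrm{Var}(Y_n)=\rho^2(S_n)$, $\mathrm{Var}(Y^*_m)=\rho^2(S^*_m)$. (A5) $\rho^2$ is continuous. (A6) $\exists\alpha_4:\mathcal S\to[0,C]$ with $\mathbb E[(Y_n-f(S_n))^4]=\alpha_4(S_n)$, $\mathbb E[(Y^*_m-f(S^*_m))^4]=\alpha_4(S^*_m)$. Infill asymptotics: for every $m$ and open $U\ni S^*_m$, infinitely many $n$ have $S_n\in U$. $\Psi^{N,k}\in\mathbb R^{M\times N}$: $\Psi^{N,k}_{mn}=1/k$ if $S_n$ among the $k$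 points of $\{S_1,\dots,S_N\}$ closest to $S^*_m$, else $0$ (ties broken uniformly at random). Adaptive $k_N$: $R_{N,t}=\max_m\max\{d(S^*_m,S_n):n\le N,\ S_n\text{ among the } t \text{ nearest neighbors of } S^*_m\}$; $k_1=1$, $k_{N+1}=k_N+1$ if $R_{N+1,k_N+1}\le a_{k_N}$, else $k_N$. $\zeta^N(n)$ is the index of the nearest neighbor of $S_n$ in $\{S_{n'}:n'\le N, n'\ne n\}$; $\Lambda^N\in\mathbb R^{N\times N}$ is diagonal with $\Lambda^N_{nn}=\frac12(Y_n-Y_{\zeta^N(n)})^2$. *)

theory Defs
  imports "HOL-Probability.Probability"
begin

text \<open>Admissible k-nearest-neighbour index sets of the target Sstar m among S 1..S N
  (all ways of breaking ties).\<close>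
definition knn_sets :: "(nat \<Rightarrow> 'a::metric_space) \<Rightarrow> 'a \<Rightarrow> nat \<Rightarrow> nat \<Rightarrow> nat set set" where
  "knn_sets S s N k = {A. A \<subseteq> {1..N} \<and> card A = k \<and>
      (\<forall>a\<in>A. \<forall>b\<in>{1..N} - A. dist s (S a) \<le> dist s (S b))}"

text \<open>R_{N,t}: the largest distance from a target to one of its t nearest neighbours
  among S 1..S N (independent of tie-breaking).\<close>
definition Rdist :: "(nat \<Rightarrow> 'a::metric_space) \<Rightarrow> (nat \<Rightarrow> 'a) \<Rightarrow> nat \<Rightarrow> nat \<Rightarrow> nat \<Rightarrow> real" where
  "Rdist S Sstar M N t = Max (\<Union>m\<in>{1..M}. \<Union>A\<in>knn_sets S (Sstar m) N t. (\<lambda>n. dist (Sstar m) (S n)) ` A)"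

definition nn_idx :: "(nat \<Rightarrow> 'a::metric_space) \<Rightarrow> nat \<Rightarrow> nat \<Rightarrow> nat set" where
  "nn_idx S N n = {z. z \<in> {1..N} \<and> z \<noteq> n \<and> (\<forall>n'\<in>{1..N} - {n}. dist (S n) (S z) \<le> dist (S n) (S n'))}"

text \<open>Matrix entries. nb N m = index set of the k_N nearest neighbours of target m,
  z N n = zeta^N(n).\<close>
definition Psi :: "(nat \<Rightarrow> nat) \<Rightarrow> (nat \<Rightarrow> nat \<Rightarrow> nat set) \<Rightarrow> nat \<Rightarrow> nat \<Rightarrow> nat \<Rightarrow> real" where
  "Psi k nb N m n = (if n \<in> nb N m then 1 / real (k N) else 0)"

definition Lam :: "(nat \<Rightarrow> real) \<Rightarrow> (nat \<Rightarrow> nat \<Rightarrow> nat) \<Rightarrow> nat \<Rightarrow> nat \<Rightarrow> real" where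
  "Lam y z N n = (y n - y (z N n))\<^sup>2 / 2"

text \<open>Entry (m,m') of k_N * Psi^{N,k_N} Lambda^N (Psi^{N,k_N})^T.\<close>
definition kPLP :: "(nat \<Rightarrow> nat) \<Rightarrow> (nat \<Rightarrow> nat \<Rightarrow> nat set) \<Rightarrow> (nat \<Rightarrow> nat \<Rightarrow> nat) \<Rightarrow> (nat \<Rightarrow> real)
     \<Rightarrow> nat \<Rightarrow> nat \<Rightarrow> nat \<Rightarrow> real" where
  "kPLP k nb z y N m m' = real (k N) *
     (\<Sum>n\<in>{1..N}. Psi k nb N m n * Lam y z N n * Psi k nb N m' n)"

end

theory Submission
  imports Defs
begin

text \<open>On the diagonal, the entry is the average, over the k N nearest neighbours n of the target,
  of the half squared differences (Y n - Y (zeta n))^2 / 2. Conditionally on the tie-breaking, which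
  is independent of the responses, such a term has mean
  (rho2 (S n) + rho2 (S (zeta n)) + (f (S n) - f (S (zeta n)))^2) / 2, and this is uniformly close
  to rho2 at the target because the adaptive rule keeps the neighbourhood radius below
  a (k N - 1), which tends to 0 while k N tends to infinity. Two terms are independent unless they
  share an index, and in Euclidean space every point is the nearest neighbour of at most K others,
  so each term is correlated with at most 2 + 2 K terms: the variance of the average is O(1 / k N)
  and Chebyshev's inequality concludes. Off the diagonal the neighbourhoods of distinct targets are
  eventually disjoint, so the entry eventually vanishes.\<close>

section \<open>Nearest neighbours in Euclidean space\<close>

lemma norm_diff_normalized_ge_1:
  fixes a b :: "'a::real_inner"
  assumes "a \<noteq> 0" "b \<noteq> 0" "norm a \<le> norm (a - b)" "norm b \<le> norm (a - b)"
  shows "1 \<le> norm (a /\<^sub>R norm a - b /\<^sub>R norm b)"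
proof -
  have na: "norm a > 0" and nb: "norm b > 0" using assms by auto
  have expand: "(norm (u - v))\<^sup>2 = (norm u)\<^sup>2 + (norm v)\<^sup>2 - 2 * (u \<bullet> v)" for u v :: 'a
    by (simp add: power2_norm_eq_inner algebra_simps inner_commute)
  have "(norm a)\<^sup>2 \<le> (norm (a - b))\<^sup>2" "(norm b)\<^sup>2 \<le> (norm (a - b))\<^sup>2"
    using assms by (simp_all add: power_mono)
  then have "2 * (a \<bullet> b) \<le> min ((norm a)\<^sup>2) ((norm b)\<^sup>2)"
    using expand[of a b] by linarith
  also have "\<dots> \<le> norm a * norm b"
  proof (cases "norm a \<le> norm b")
    case True
    then have "(norm a)\<^sup>2 \<le> norm a * norm b" by (simp add: power2_eq_square mult_left_mono)
    then show ?thesis by (simp add: min_le_iff_disj)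
  next
    case False
    then have "(norm b)\<^sup>2 \<le> norm a * norm b" by (simp add: power2_eq_square mult_right_mono)
    then show ?thesis by (simp add: min_le_iff_disj)
  qed
  finally have ab: "2 * (a \<bullet> b) \<le> norm a * norm b" .
  have "(norm (a /\<^sub>R norm a - b /\<^sub>R norm b))\<^sup>2 = 2 - 2 * (a \<bullet> b) / (norm a * norm b)"
    using na nb by (simp add: expand field_simps)
  also have "\<dots> \<ge> 1" using ab na nb by (simp add: field_simps)
  finally show ?thesis using abs_le_square_iff[of 1 "norm (a /\<^sub>R norm a - b /\<^sub>R norm b)"] by simp
qed

text \<open>Seen from y, two points of X are at an angle of at least 60 degrees, so their directions
  are 1-separated on the unit sphere; a finite cover of the sphere by balls of radius 1/2 then
  bounds card X.\<close>

lemma nn_indegree_bounded: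
  "\<exists>K::nat. \<forall>(X::'a::euclidean_space set) y. finite X \<longrightarrow> y \<notin> X \<longrightarrow>
     (\<forall>x\<in>X. \<forall>x'\<in>X. x' \<noteq> x \<longrightarrow> dist x y \<le> dist x x') \<longrightarrow> card X \<le> K"
proof -
  have "compact (sphere (0::'a) 1)" by simp
  then obtain F where F: "finite F" "F \<subseteq> sphere 0 1" "sphere (0::'a) 1 \<subseteq> (\<Union>c\<in>F. ball c (1/2))"
    by (rule compactE_image[of _ _ "\<lambda>c. ball c (1/2)"]) auto
  show ?thesis
  proof (intro exI[of _ "card F"] allI impI)
    fix X :: "'a set" and y
    assume fX: "finite X" and yX: "y \<notin> X"
      and nn: "\<forall>x\<in>X. \<forall>x'\<in>X. x' \<noteq> x \<longrightarrow> dist x y \<le> dist x x'"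
    define u where "u x = (x - y) /\<^sub>R norm (x - y)" for x
    have "u x \<in> sphere 0 1" if "x \<in> X" for x
    proof -
      have "x - y \<noteq> 0" using that yX by auto
      then show ?thesis by (simp add: u_def)
    qed
    then have "\<exists>c. c \<in> F \<and> u x \<in> ball c (1/2)" if "x \<in> X" for x
      using F(3) that by blast
    then obtain g where g: "\<And>x. x \<in> X \<Longrightarrow> g x \<in> F \<and> dist (g x) (u x) < 1/2"
      by (metis mem_ball)
    have sep: "1 \<le> dist (u x) (u x')" if "x \<in> X" "x' \<in> X" "x \<noteq> x'" for x x'
    proof -
      have "dist x' y \<le> dist x' x" using nn that by auto
      then have "1 \<le> norm ((x - y) /\<^sub>R norm (x - y) - (x' - y) /\<^sub>R norm (x' - y))"
        using that yX nn
        by (intro norm_diff_normalized_ge_1) (auto simp: dist_norm norm_minus_commute)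
      then show ?thesis by (simp add: u_def dist_norm)
    qed
    have "inj_on g X"
    proof (rule inj_onI, rule ccontr)
      fix x x' assume xx: "x \<in> X" "x' \<in> X" "g x = g x'" "x \<noteq> x'"
      have "dist (u x) (u x') \<le> dist (u x) (g x) + dist (g x) (u x')" by (rule dist_triangle)
      also have "\<dots> < 1" using g[OF xx(1)] g[OF xx(2)] xx(3) by (simp add: dist_commute)
      finally show False using sep[OF xx(1,2,4)] by simp
    qed
    then show "card X \<le> card F"
      using F(1) g by (intro card_inj_on_le) auto
  qed
qed

lemma nn_idx_fibre_card_le:
  fixes S :: "nat \<Rightarrow> 'a::metric_space"
  assumes K: "\<And>(X::'a set) y. finite X \<Longrightarrow> y \<notin> X \<Longrightarrow>
      (\<forall>x\<in>X. \<forall>x'\<in>X. x' \<noteq> x \<longrightarrow> dist x y \<le> dist x x') \<Longrightarrow> card X \<le> K"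
    and inj: "inj_on S {1..N}" and A: "A \<subseteq> {1..N}"
    and \<zeta>: "\<And>n. n \<in> A \<Longrightarrow> \<zeta> n \<in> nn_idx S N n"
  shows "card {n\<in>A. \<zeta> n = x} \<le> K"
proof (cases "{n\<in>A. \<zeta> n = x} = {}")
  case False
  then obtain n0 where "n0 \<in> A" "\<zeta> n0 = x" by auto
  then have x: "x \<in> {1..N}" using \<zeta> by (auto simp: nn_idx_def)
  have injA: "inj_on S {n\<in>A. \<zeta> n = x}" by (rule inj_on_subset[OF inj]) (use A in auto)
  have "card (S ` {n\<in>A. \<zeta> n = x}) \<le> K"
  proof (rule K)
    show "finite (S ` {n\<in>A. \<zeta> n = x})" using A by (auto intro: finite_subset)
    show "S x \<notin> S ` {n\<in>A. \<zeta> n = x}"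
    proof
      assume "S x \<in> S ` {n\<in>A. \<zeta> n = x}"
      then obtain n where n: "n \<in> A" "\<zeta> n = x" "S x = S n" by auto
      then have "x = n" using inj_onD[OF inj n(3)] x A by auto
      then show False using \<zeta>[OF n(1)] n(2) by (simp add: nn_idx_def)
    qed
    show "\<forall>u\<in>S ` {n\<in>A. \<zeta> n = x}. \<forall>u'\<in>S ` {n\<in>A. \<zeta> n = x}. u' \<noteq> u \<longrightarrow> dist u (S x) \<le> dist u u'"
    proof (intro ballI impI)
      fix u u' assume "u \<in> S ` {n\<in>A. \<zeta> n = x}" "u' \<in> S ` {n\<in>A. \<zeta> n = x}" "u' \<noteq> u"
      then obtain n n' where "n \<in> A" "\<zeta> n = x" "u = S n" "n' \<in> A" "u' = S n'" "n' \<noteq> n" by auto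
      then show "dist u (S x) \<le> dist u u'" using \<zeta>[of n] A by (auto simp: nn_idx_def)
    qed
  qed
  then show ?thesis by (simp add: card_image[OF injA])
qed (metis card.empty zero_le)

lemma nn_idx_dist_le:
  assumes "\<zeta> \<in> nn_idx S N n" "n' \<in> {1..N}" "n' \<noteq> n"
    and "dist s (S n) \<le> \<eta>" "dist s (S n') \<le> \<eta>"
  shows "dist (S n) (S \<zeta>) \<le> 2 * \<eta>"
proof -
  have "dist (S n) (S \<zeta>) \<le> dist (S n) (S n')" using assms(1-3) by (auto simp: nn_idx_def)
  also have "\<dots> \<le> dist s (S n) + dist s (S n')" by (rule dist_triangle3)
  finally show ?thesis using assms(4,5) by simp
qed

lemma card_overlapping_pairs_le:
  assumes "finite A" and fibres: "\<And>x. card {n\<in>A. \<zeta> n = x} \<le> K"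
  shows "card {(i, j) \<in> A \<times> A. {i, \<zeta> i} \<inter> {j, \<zeta> j} \<noteq> {}} \<le> (2 + 2 * K) * card A"
proof -
  define J where "J i = {j\<in>A. {i, \<zeta> i} \<inter> {j, \<zeta> j} \<noteq> {}}" for i
  have "card (J i) \<le> 2 + 2 * K" for i
  proof -
    have "J i \<subseteq> {i, \<zeta> i} \<union> {j\<in>A. \<zeta> j = i} \<union> {j\<in>A. \<zeta> j = \<zeta> i}" by (auto simp: J_def)
    then have "card (J i) \<le> card ({i, \<zeta> i} \<union> {j\<in>A. \<zeta> j = i} \<union> {j\<in>A. \<zeta> j = \<zeta> i})"
      using \<open>finite A\<close> by (intro card_mono) auto
    also have "\<dots> \<le> card {i, \<zeta> i} + card {j\<in>A. \<zeta> j = i} + card {j\<in>A. \<zeta> j = \<zeta> i}"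
      by (meson card_Un_le add_le_mono order_trans le_refl)
    also have "\<dots> \<le> 2 + K + K"
      using fibres[of i] fibres[of "\<zeta> i"] by (intro add_mono) (cases "i = \<zeta> i", auto)
    finally show ?thesis by simp
  qed
  moreover have "{(i, j) \<in> A \<times> A. {i, \<zeta> i} \<inter> {j, \<zeta> j} \<noteq> {}} = Sigma A J"
    by (auto simp: J_def)
  ultimately show ?thesis
    using \<open>finite A\<close> card_SigmaI[of A J] sum_mono[of A "\<lambda>i. card (J i)" "\<lambda>_. 2 + 2 * K"]
    by (simp add: J_def mult.commute)
qed

section \<open>Sets of k nearest neighbours\<close>

lemma knn_sets_subset: "A \<in> knn_sets S s N t \<Longrightarrow> A \<subseteq> {1..N}"
  and knn_sets_card: "A \<in> knn_sets S s N t \<Longrightarrow> card A = t"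
  and knn_sets_dist_le:
    "A \<in> knn_sets S s N t \<Longrightarrow> a \<in> A \<Longrightarrow> b \<in> {1..N} - A \<Longrightarrow> dist s (S a) \<le> dist s (S b)"
  by (simp_all add: knn_sets_def)

lemma knn_sets_finite: "A \<in> knn_sets S s N t \<Longrightarrow> finite A"
  using finite_subset[OF knn_sets_subset] by blast

lemma finite_knn_sets: "finite (knn_sets S s N t)"
  by (rule finite_subset[of _ "Pow {1..N}"]) (auto simp: knn_sets_def)

lemma knn_sets_nonempty: "t \<le> N \<Longrightarrow> knn_sets S s N t \<noteq> {}"
proof (induction t)
  case 0
  have "{} \<in> knn_sets S s N 0" by (simp add: knn_sets_def)
  then show ?case by blast
next
  case (Suc t)
  then obtain A where A: "A \<in> knn_sets S s N t" by auto
  define B where "B = {1..N} - A"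
  have "card B = N - t"
    unfolding B_def using card_Diff_subset[OF knn_sets_finite[OF A] knn_sets_subset[OF A]]
    by (simp add: knn_sets_card[OF A])
  then have "B \<noteq> {}" using Suc.prems by auto
  have "finite B" by (simp add: B_def)
  define \<mu> where "\<mu> = Min ((\<lambda>b. dist s (S b)) ` B)"
  have "\<mu> \<in> (\<lambda>b. dist s (S b)) ` B"
    unfolding \<mu>_def using \<open>finite B\<close> \<open>B \<noteq> {}\<close> by (intro Min_in) auto
  then obtain b where b: "b \<in> B" "dist s (S b) = \<mu>" by auto
  have bmin: "dist s (S b) \<le> dist s (S b')" if "b' \<in> B" for b'
    using b that \<open>finite B\<close> by (auto simp: \<mu>_def)
  have "insert b A \<in> knn_sets S s N (Suc t)"
    unfolding knn_sets_def
  proof (intro CollectI conjI ballI)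
    show "insert b A \<subseteq> {1..N}" using knn_sets_subset[OF A] b by (auto simp: B_def)
    show "card (insert b A) = Suc t"
      using b knn_sets_card[OF A] knn_sets_finite[OF A] by (simp add: B_def)
    fix x y assume "x \<in> insert b A" "y \<in> {1..N} - insert b A"
    then show "dist s (S x) \<le> dist s (S y)"
      using bmin knn_sets_dist_le[OF A] by (auto simp: B_def)
  qed
  then show ?case by blast
qed

lemma knn_sets_eq_if_subset:
  "A \<in> knn_sets S s N t \<Longrightarrow> A' \<in> knn_sets S' s' N' t \<Longrightarrow> A \<subseteq> A' \<Longrightarrow> A = A'"
  using card_subset_eq[of A' A] knn_sets_finite[of A'] knn_sets_card by metis

lemma finite_Rdist_range:
  fixes M :: nat
  shows "finite (\<Union>m\<in>{1..M}. \<Union>A\<in>knn_sets S (Sstar m) N t. (\<lambda>n. dist (Sstar m) (S n)) ` A)"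
  by (intro finite_UN_I finite_imageI finite_knn_sets) (auto dest: knn_sets_finite)

lemma dist_le_Rdist:
  fixes M :: nat
  shows "m \<in> {1..M} \<Longrightarrow> A \<in> knn_sets S (Sstar m) N t \<Longrightarrow> n \<in> A \<Longrightarrow>
    dist (Sstar m) (S n) \<le> Rdist S Sstar M N t"
  unfolding Rdist_def by (rule Max_ge[OF finite_Rdist_range]) blast

lemma Rdist_le:
  assumes "1 \<le> M" "1 \<le> t" "t \<le> N"
    and bound: "\<And>m A n. m \<in> {1..M} \<Longrightarrow> A \<in> knn_sets S (Sstar m) N t \<Longrightarrow> n \<in> A \<Longrightarrow>
        dist (Sstar m) (S n) \<le> \<eta>"
  shows "Rdist S Sstar M N t \<le> \<eta>"
proof -
  obtain A where A: "A \<in> knn_sets S (Sstar 1) N t" using knn_sets_nonempty assms(3) by blast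
  have "A \<noteq> {}" using knn_sets_card[OF A] assms(2) by auto
  then obtain n where n: "n \<in> A" by blast
  have "dist (Sstar 1) (S n) \<in> (\<Union>m\<in>{1..M}. \<Union>A\<in>knn_sets S (Sstar m) N t. (\<lambda>n. dist (Sstar m) (S n)) ` A)"
    using A assms(1) n by force
  then have "(\<Union>m\<in>{1..M}. \<Union>A\<in>knn_sets S (Sstar m) N t. (\<lambda>n. dist (Sstar m) (S n)) ` A) \<noteq> {}"
    by blast
  then show ?thesis unfolding Rdist_def
    by (rule Max.boundedI[OF finite_Rdist_range]) (use bound in auto)
qed

lemma Rdist_antimono:
  assumes "1 \<le> M" "1 \<le> t" "t \<le> N" "N \<le> N'"
  shows "Rdist S Sstar M N' t \<le> Rdist S Sstar M N t"
proof (rule Rdist_le)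
  fix m A' n assume m: "m \<in> {1..M}" and A': "A' \<in> knn_sets S (Sstar m) N' t" and n: "n \<in> A'"
  obtain A where A: "A \<in> knn_sets S (Sstar m) N t" using knn_sets_nonempty assms(3) by blast
  show "dist (Sstar m) (S n) \<le> Rdist S Sstar M N t"
  proof (cases "n \<in> A")
    case True
    then show ?thesis using dist_le_Rdist[where Sstar=Sstar, OF m A] by blast
  next
    case False
    then have "\<not> A \<subseteq> A'" using knn_sets_eq_if_subset[OF A A'] n by auto
    then obtain b where b: "b \<in> A" "b \<notin> A'" by blast
    then have "b \<in> {1..N'}" using knn_sets_subset[OF A] assms(4) by auto
    then have "dist (Sstar m) (S n) \<le> dist (Sstar m) (S b)"
      using knn_sets_dist_le[OF A' n] b by blast
    also have "\<dots> \<le> Rdist S Sstar M N t" using dist_le_Rdist[where Sstar=Sstar, OF m A b(1)] .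
    finally show ?thesis .
  qed
qed (use assms in auto)

lemma eventually_knn_sets_close:
  fixes S Sstar :: "nat \<Rightarrow> 'a::metric_space"
  assumes infill: "\<And>m U. m \<in> {1..M} \<Longrightarrow> open U \<Longrightarrow> Sstar m \<in> U \<Longrightarrow>
      infinite {n. n \<ge> 1 \<and> S n \<in> U}"
    and "\<eta> > 0"
  shows "eventually (\<lambda>N. \<forall>m\<in>{1..M}. \<forall>A\<in>knn_sets S (Sstar m) N t. \<forall>n\<in>A.
      dist (Sstar m) (S n) < \<eta>) sequentially"
proof (intro eventually_ball_finite ballI)
  fix m assume m: "m \<in> {1..M}"
  have "infinite {n. n \<ge> 1 \<and> S n \<in> ball (Sstar m) \<eta>}" using infill[OF m open_ball] assms(2) by simp
  then obtain T where T: "finite T" "card T = t" "T \<subseteq> {n. n \<ge> 1 \<and> S n \<in> ball (Sstar m) \<eta>}"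
    using infinite_arbitrarily_large by blast
  show "eventually (\<lambda>N. \<forall>A\<in>knn_sets S (Sstar m) N t. \<forall>n\<in>A. dist (Sstar m) (S n) < \<eta>) sequentially"
  proof (intro eventually_sequentiallyI[of "Sup T"] ballI)
    fix N A n assume N: "Sup T \<le> N" and A: "A \<in> knn_sets S (Sstar m) N t" and n: "n \<in> A"
    have TN: "T \<subseteq> {1..N}"
    proof
      fix x assume "x \<in> T"
      then show "x \<in> {1..N}" using le_cSup_finite[OF T(1), of x] N T(3) by auto
    qed
    show "dist (Sstar m) (S n) < \<eta>"
    proof (cases "n \<in> T")
      case True
      then show ?thesis using T(3) by (auto simp: dist_commute)
    next
      case False
      have "\<not> T \<subseteq> A"
      proof
        assume "T \<subseteq> A"
        then have "T = A" using card_subset_eq[OF knn_sets_finite[OF A]] T(2) knn_sets_card[OF A] by simp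
        then show False using n False by simp
      qed
      then obtain b where b: "b \<in> T" "b \<notin> A" by blast
      then have "dist (Sstar m) (S n) \<le> dist (Sstar m) (S b)"
        using knn_sets_dist_le[OF A n] TN by blast
      also have "\<dots> < \<eta>" using b T(3) by (auto simp: dist_commute)
      finally show ?thesis .
    qed
  qed
qed simp

section \<open>The adaptive number of neighbours\<close>

locale adaptive_knn =
  fixes S Sstar :: "nat \<Rightarrow> 'a::metric_space" and M :: nat and a :: "nat \<Rightarrow> real" and k :: "nat \<Rightarrow> nat"
  assumes M_pos: "1 \<le> M"
    and infill: "\<And>m U. m \<in> {1..M} \<Longrightarrow> open U \<Longrightarrow> Sstar m \<in> U \<Longrightarrow>
        infinite {n. n \<ge> 1 \<and> S n \<in> U}"
    and a_pos: "\<And>t. t \<ge> 1 \<Longrightarrow> a t > 0"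
    and a_lim: "a \<longlonglongrightarrow> 0"
    and k_1: "k 1 = 1"
    and k_Suc: "\<And>N. N \<ge> 1 \<Longrightarrow> k (Suc N) =
        (if Rdist S Sstar M (Suc N) (k N + 1) \<le> a (k N) then k N + 1 else k N)"
begin

lemma k_bounds: "N \<ge> 1 \<Longrightarrow> 1 \<le> k N \<and> k N \<le> N"
proof (induction N rule: nat_induct_at_least)
  case (Suc n) then show ?case using k_Suc[of n] by auto
qed (use k_1 in simp)

lemma k_mono:
  assumes "1 \<le> N" "N \<le> N'"
  shows "k N \<le> k N'"
  using assms(2)
proof (induction N' rule: dec_induct)
  case (step n) then show ?case using k_Suc[of n] assms(1) by auto
qed simp

text \<open>k grows: once N is so large that the k N + 1 nearest neighbours of every target are
  within a (k N), the radius test in the recursion succeeds.\<close>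

lemma k_unbounded: "\<exists>N\<ge>1. k N \<ge> T"
proof (induction T)
  case (Suc T)
  then obtain N0 where N0: "N0 \<ge> 1" "k N0 \<ge> T" by auto
  show ?case
  proof (cases "k N0 \<ge> Suc T")
    case False
    then have T: "k N0 = T" "T \<ge> 1" using N0 k_bounds[OF N0(1)] by auto
    have ev: "eventually (\<lambda>N. \<forall>m\<in>{1..M}. \<forall>A\<in>knn_sets S (Sstar m) N (T + 1). \<forall>b\<in>A.
        dist (Sstar m) (S b) < a T) sequentially"
      by (rule eventually_knn_sets_close) (fact infill, rule a_pos[OF T(2)])
    obtain N where close: "\<forall>m\<in>{1..M}. \<forall>A\<in>knn_sets S (Sstar m) (Suc N) (T + 1). \<forall>b\<in>A.
          dist (Sstar m) (S b) < a T"
      and N: "N \<ge> N0 + T + 1"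
      using eventually_conj[OF sequentially_offset[OF ev, of 1] eventually_ge_at_top[of "N0 + T + 1"]]
        eventually_sequentially by auto
    have R: "Rdist S Sstar M (Suc N) (T + 1) \<le> a T"
      by (rule Rdist_le) (use M_pos N close in \<open>auto intro: less_imp_le\<close>)
    show ?thesis
    proof (cases "k N \<ge> Suc T")
      case False
      then have "k N = T" using k_mono[OF N0(1), of N] N T by simp
      then have "k (Suc N) = Suc T" using k_Suc[of N] R N by simp
      then show ?thesis by (intro exI[of _ "Suc N"]) simp
    next
      case True
      then show ?thesis using N by (intro exI[of _ N]) simp
    qed
  qed (use N0 in auto)
qed auto

lemma eventually_k_ge: "eventually (\<lambda>N. T \<le> k N) sequentially"
proof -
  obtain N0 where "N0 \<ge> 1" "k N0 \<ge> T" using k_unbounded by blast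
  then show ?thesis
    using k_mono[of N0] by (intro eventually_sequentiallyI[of N0]) (auto intro: order_trans)
qed

lemma filterlim_k: "filterlim k at_top sequentially"
  unfolding filterlim_at_top using eventually_k_ge by blast

lemma Rdist_k_le: "N \<ge> 1 \<Longrightarrow> k N \<ge> 2 \<Longrightarrow> Rdist S Sstar M N (k N) \<le> a (k N - 1)"
proof (induction N rule: nat_induct_at_least)
  case (Suc n)
  show ?case
  proof (cases "Rdist S Sstar M (Suc n) (k n + 1) \<le> a (k n)")
    case True
    then show ?thesis using k_Suc[OF Suc.hyps] by simp
  next
    case False
    then have k: "k (Suc n) = k n" using k_Suc[OF Suc.hyps] by simp
    have "Rdist S Sstar M (Suc n) (k n) \<le> Rdist S Sstar M n (k n)"
      using M_pos k_bounds[OF Suc.hyps] by (intro Rdist_antimono) auto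
    also have "\<dots> \<le> a (k n - 1)" using Suc.IH Suc.prems k by simp
    finally show ?thesis using k by simp
  qed
qed (use k_1 in simp)

lemma eventually_knn_close:
  assumes "\<eta> > 0"
  shows "eventually (\<lambda>N. \<forall>m\<in>{1..M}. \<forall>A\<in>knn_sets S (Sstar m) N (k N). \<forall>n\<in>A.
      dist (Sstar m) (S n) \<le> \<eta>) sequentially"
proof -
  obtain T where T: "\<And>t. t \<ge> T \<Longrightarrow> a t < \<eta>"
    using order_tendstoD(2)[OF a_lim assms] unfolding eventually_sequentially by blast
  show ?thesis
    using eventually_conj[OF eventually_k_ge[of "T + 2"] eventually_ge_at_top[of 1]]
  proof eventually_elim
    case (elim N)
    have "Rdist S Sstar M N (k N) \<le> a (k N - 1)" using Rdist_k_le elim by auto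
    also have "\<dots> < \<eta>" using T elim by auto
    finally show ?case using dist_le_Rdist[where S=S and Sstar=Sstar] by (meson order_trans less_imp_le)
  qed
qed

end

section \<open>Second moments of sums and independence\<close>

lemma integrable_mult_of_square_integrable:
  fixes f g :: "'a \<Rightarrow> real"
  assumes [measurable]: "f \<in> borel_measurable M" "g \<in> borel_measurable M"
    and "integrable M (\<lambda>x. (f x)\<^sup>2)" "integrable M (\<lambda>x. (g x)\<^sup>2)"
  shows "integrable M (\<lambda>x. f x * g x)"
proof (rule Bochner_Integration.integrable_bound)
  show "integrable M (\<lambda>x. (f x)\<^sup>2 + (g x)\<^sup>2)" using assms by simp
  have "\<bar>f x * g x\<bar> \<le> (f x)\<^sup>2 + (g x)\<^sup>2" for x
  proof -
    have "0 \<le> (\<bar>f x\<bar> - \<bar>g x\<bar>)\<^sup>2" by simp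
    then have "2 * (\<bar>f x\<bar> * \<bar>g x\<bar>) \<le> (f x)\<^sup>2 + (g x)\<^sup>2" by (simp add: power2_eq_square algebra_simps)
    then show ?thesis unfolding abs_mult using zero_le_mult_iff[of "\<bar>f x\<bar>" "\<bar>g x\<bar>"] by linarith
  qed
  then show "AE x in M. norm (f x * g x) \<le> norm ((f x)\<^sup>2 + (g x)\<^sup>2)" by simp
qed simp

lemma integrable_square_sum:
  fixes W :: "'i \<Rightarrow> 'a \<Rightarrow> real"
  assumes "finite I" "\<And>i. i \<in> I \<Longrightarrow> W i \<in> borel_measurable M"
    and "\<And>i. i \<in> I \<Longrightarrow> integrable M (\<lambda>\<omega>. (W i \<omega>)\<^sup>2)"
  shows "integrable M (\<lambda>\<omega>. (\<Sum>i\<in>I. W i \<omega>)\<^sup>2)"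
proof -
  have "(\<lambda>\<omega>. (\<Sum>i\<in>I. W i \<omega>)\<^sup>2) = (\<lambda>\<omega>. \<Sum>i\<in>I. \<Sum>j\<in>I. W i \<omega> * W j \<omega>)"
    by (simp add: power2_eq_square sum_product)
  then show ?thesis
    using assms by (simp add: integrable_sum integrable_mult_of_square_integrable)
qed

lemma (in prob_space) variance_sum:
  fixes W :: "'i \<Rightarrow> 'a \<Rightarrow> real"
  assumes "finite I"
    and [measurable]: "\<And>i. i \<in> I \<Longrightarrow> W i \<in> borel_measurable M"
    and sq: "\<And>i. i \<in> I \<Longrightarrow> integrable M (\<lambda>\<omega>. (W i \<omega>)\<^sup>2)"
  shows "variance (\<lambda>\<omega>. \<Sum>i\<in>I. W i \<omega>) = (\<Sum>i\<in>I. \<Sum>j\<in>I.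
      expectation (\<lambda>\<omega>. W i \<omega> * W j \<omega>) - expectation (W i) * expectation (W j))"
proof -
  define \<mu> where "\<mu> i = expectation (W i)" for i
  have int: "integrable M (W i)" if "i \<in> I" for i
    using square_integrable_imp_integrable[OF _ sq[OF that]] that by simp
  have centred: "(\<lambda>\<omega>. (W i \<omega> - \<mu> i) * (W j \<omega> - \<mu> j)) =
      (\<lambda>\<omega>. W i \<omega> * W j \<omega> - \<mu> j * W i \<omega> - \<mu> i * W j \<omega> + \<mu> i * \<mu> j)" for i j
    by (auto simp: algebra_simps)
  have intc: "integrable M (\<lambda>\<omega>. (W i \<omega> - \<mu> i) * (W j \<omega> - \<mu> j))"
    and Ec: "expectation (\<lambda>\<omega>. (W i \<omega> - \<mu> i) * (W j \<omega> - \<mu> j)) =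
      expectation (\<lambda>\<omega>. W i \<omega> * W j \<omega>) - expectation (W i) * expectation (W j)"
    if "i \<in> I" "j \<in> I" for i j
  proof -
    have "integrable M (\<lambda>\<omega>. W i \<omega> * W j \<omega>)"
      using that by (intro integrable_mult_of_square_integrable sq) auto
    then show "integrable M (\<lambda>\<omega>. (W i \<omega> - \<mu> i) * (W j \<omega> - \<mu> j))"
      and "expectation (\<lambda>\<omega>. (W i \<omega> - \<mu> i) * (W j \<omega> - \<mu> j)) =
        expectation (\<lambda>\<omega>. W i \<omega> * W j \<omega>) - expectation (W i) * expectation (W j)"
      unfolding centred using int that prob_space by (simp_all add: \<mu>_def)
  qed
  have "expectation (\<lambda>\<omega>. \<Sum>i\<in>I. W i \<omega>) = (\<Sum>i\<in>I. \<mu> i)"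
    unfolding \<mu>_def using int by (intro Bochner_Integration.integral_sum) auto
  then have "variance (\<lambda>\<omega>. \<Sum>i\<in>I. W i \<omega>) = expectation (\<lambda>\<omega>. (\<Sum>i\<in>I. W i \<omega> - \<mu> i)\<^sup>2)"
    by (simp add: sum_subtractf)
  also have "\<dots> = expectation (\<lambda>\<omega>. \<Sum>i\<in>I. \<Sum>j\<in>I. (W i \<omega> - \<mu> i) * (W j \<omega> - \<mu> j))"
    by (simp add: power2_eq_square sum_product)
  also have "\<dots> = (\<Sum>i\<in>I. expectation (\<lambda>\<omega>. \<Sum>j\<in>I. (W i \<omega> - \<mu> i) * (W j \<omega> - \<mu> j)))"
    using intc by (intro Bochner_Integration.integral_sum integrable_sum) auto
  also have "\<dots> = (\<Sum>i\<in>I. \<Sum>j\<in>I. expectation (\<lambda>\<omega>. (W i \<omega> - \<mu> i) * (W j \<omega> - \<mu> j)))"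
    using intc by (intro sum.cong refl Bochner_Integration.integral_sum) auto
  also have "\<dots> = (\<Sum>i\<in>I. \<Sum>j\<in>I.
      expectation (\<lambda>\<omega>. W i \<omega> * W j \<omega>) - expectation (W i) * expectation (W j))"
    using Ec by (intro sum.cong refl) auto
  finally show ?thesis .
qed

lemma (in prob_space) variance_sum_le_card_dependent:
  fixes W :: "'i \<Rightarrow> 'a \<Rightarrow> real"
  assumes "finite I"
    and "\<And>i. i \<in> I \<Longrightarrow> W i \<in> borel_measurable M"
    and "\<And>i. i \<in> I \<Longrightarrow> integrable M (\<lambda>\<omega>. (W i \<omega>)\<^sup>2)"
    and uncorrelated: "\<And>i j. i \<in> I \<Longrightarrow> j \<in> I \<Longrightarrow> (i, j) \<notin> D \<Longrightarrow>
        expectation (\<lambda>\<omega>. W i \<omega> * W j \<omega>) = expectation (W i) * expectation (W j)"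
    and covariance: "\<And>i j. i \<in> I \<Longrightarrow> j \<in> I \<Longrightarrow>
        expectation (\<lambda>\<omega>. W i \<omega> * W j \<omega>) - expectation (W i) * expectation (W j) \<le> B"
    and "B \<ge> 0"
  shows "variance (\<lambda>\<omega>. \<Sum>i\<in>I. W i \<omega>) \<le> B * real (card (D \<inter> I \<times> I))"
proof -
  define c where "c = (\<lambda>(i, j). expectation (\<lambda>\<omega>. W i \<omega> * W j \<omega>) - expectation (W i) * expectation (W j))"
  have "variance (\<lambda>\<omega>. \<Sum>i\<in>I. W i \<omega>) = sum c (I \<times> I)"
    using variance_sum[OF assms(1-3)] by (simp add: c_def sum.cartesian_product)
  also have "\<dots> = sum c (D \<inter> I \<times> I)"
  proof (rule sum.mono_neutral_right)
    show "\<forall>p\<in>I \<times> I - D \<inter> I \<times> I. c p = 0"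
      using uncorrelated by (force simp: c_def)
  qed (use assms(1) in auto)
  also have "\<dots> \<le> (\<Sum>p\<in>D \<inter> I \<times> I. B)"
    using covariance by (intro sum_mono) (auto simp: c_def)
  finally show ?thesis by (simp add: mult.commute)
qed

lemma (in prob_space) prob_abs_diff_gt_le_variance:
  assumes [measurable]: "Z \<in> borel_measurable M" and "integrable M (\<lambda>\<omega>. (Z \<omega>)\<^sup>2)"
    and bias: "\<bar>expectation Z - c\<bar> \<le> \<epsilon> / 2" and "\<epsilon> > 0"
  shows "prob {\<omega> \<in> space M. \<epsilon> < \<bar>Z \<omega> - c\<bar>} \<le> 4 * variance Z / \<epsilon>\<^sup>2"
proof -
  have "\<epsilon> / 2 \<le> \<bar>Z \<omega> - expectation Z\<bar>" if "\<epsilon> < \<bar>Z \<omega> - c\<bar>" for \<omega>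
    using that bias abs_triangle_ineq[of "Z \<omega> - expectation Z" "expectation Z - c"] by simp
  then have "{\<omega> \<in> space M. \<epsilon> < \<bar>Z \<omega> - c\<bar>} \<subseteq> {\<omega> \<in> space M. \<epsilon> / 2 \<le> \<bar>Z \<omega> - expectation Z\<bar>}"
    by auto
  then have "prob {\<omega> \<in> space M. \<epsilon> < \<bar>Z \<omega> - c\<bar>} \<le> prob {\<omega> \<in> space M. \<epsilon> / 2 \<le> \<bar>Z \<omega> - expectation Z\<bar>}"
    by (intro finite_measure_mono) measurable
  also have "\<dots> \<le> variance Z / (\<epsilon> / 2)\<^sup>2"
    using assms by (intro Chebyshev_inequality) auto
  finally show ?thesis by (simp add: power_divide algebra_simps)
qed

lemma (in prob_space) prob_le_of_indep_cover:
  assumes indep: "indep_set \<A> \<B>" and "finite I"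
    and A: "\<And>i. i \<in> I \<Longrightarrow> A i \<in> \<A>" and B: "\<And>i. i \<in> I \<Longrightarrow> B i \<in> \<B>"
    and disj: "disjoint_family_on B I"
    and cover: "E \<subseteq> (\<Union>i\<in>I. A i \<inter> B i)"
    and bound: "\<And>i. i \<in> I \<Longrightarrow> prob (A i) \<le> \<beta>" and "0 \<le> \<beta>"
  shows "prob E \<le> \<beta>"
proof -
  have ev: "A i \<in> events" "B i \<in> events" if "i \<in> I" for i
    using indep_setD_ev1[OF indep] indep_setD_ev2[OF indep] A[OF that] B[OF that] by blast+
  have "prob E \<le> prob (\<Union>i\<in>I. A i \<inter> B i)"
    using cover ev \<open>finite I\<close> by (intro finite_measure_mono) auto
  also have "\<dots> \<le> (\<Sum>i\<in>I. prob (A i \<inter> B i))"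
    using ev \<open>finite I\<close> by (intro finite_measure_subadditive_finite) auto
  also have "\<dots> = (\<Sum>i\<in>I. prob (A i) * prob (B i))"
    using indep_setD[OF indep A B] by simp
  also have "\<dots> \<le> (\<Sum>i\<in>I. \<beta> * prob (B i))"
    using bound by (intro sum_mono mult_right_mono) auto
  also have "\<dots> = \<beta> * prob (\<Union>i\<in>I. B i)"
    using ev \<open>finite I\<close> disj by (subst finite_measure_finite_Union) (auto simp: sum_distrib_left)
  also have "\<dots> \<le> \<beta>"
    using \<open>0 \<le> \<beta>\<close> by (simp add: mult_left_le)
  finally show ?thesis .
qed

lemma (in prob_space) integral_mult_indep_restrict:
  fixes X :: "'i \<Rightarrow> 'a \<Rightarrow> real" and G H :: "('i \<Rightarrow> real) \<Rightarrow> real"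
  assumes indep: "indep_vars (\<lambda>_. borel) X I" and "A \<inter> B = {}" "A \<subseteq> I" "B \<subseteq> I"
    and G: "G \<in> borel_measurable (Pi\<^sub>M A (\<lambda>_. borel))"
    and H: "H \<in> borel_measurable (Pi\<^sub>M B (\<lambda>_. borel))"
    and "integrable M (\<lambda>\<omega>. G (restrict (\<lambda>i. X i \<omega>) A))"
    and "integrable M (\<lambda>\<omega>. H (restrict (\<lambda>i. X i \<omega>) B))"
  shows "expectation (\<lambda>\<omega>. G (restrict (\<lambda>i. X i \<omega>) A) * H (restrict (\<lambda>i. X i \<omega>) B)) =
      expectation (\<lambda>\<omega>. G (restrict (\<lambda>i. X i \<omega>) A)) * expectation (\<lambda>\<omega>. H (restrict (\<lambda>i. X i \<omega>) B))"
proof -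
  have "indep_var borel (G \<circ> (\<lambda>\<omega>. restrict (\<lambda>i. X i \<omega>) A)) borel (H \<circ> (\<lambda>\<omega>. restrict (\<lambda>i. X i \<omega>) B))"
    using indep_var_restrict[OF indep assms(2-4)] G H by (rule indep_var_compose)
  then show ?thesis
    using assms(7,8) by (intro indep_var_lebesgue_integral) (simp_all add: comp_def)
qed

lemma power4_sum3_le:
  fixes u v w :: real
  shows "(u + v + w) ^ 4 \<le> 27 * (u ^ 4 + v ^ 4 + w ^ 4)"
proof -
  have sq3: "(x + y + z)\<^sup>2 \<le> 3 * (x\<^sup>2 + y\<^sup>2 + z\<^sup>2)" for x y z :: real
    using sum_squares_ge_zero[of "x - y" "y - z"] sum_squares_ge_zero[of "x - z" 0]
    by (simp add: power2_eq_square algebra_simps)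
  have "(u + v + w) ^ 4 = ((u + v + w)\<^sup>2)\<^sup>2" by simp
  also have "\<dots> \<le> (3 * (u\<^sup>2 + v\<^sup>2 + w\<^sup>2))\<^sup>2" by (rule power_mono[OF sq3]) simp
  also have "\<dots> = 9 * (u\<^sup>2 + v\<^sup>2 + w\<^sup>2)\<^sup>2" by (subst power_mult_distrib) simp
  also have "\<dots> \<le> 9 * (3 * ((u\<^sup>2)\<^sup>2 + (v\<^sup>2)\<^sup>2 + (w\<^sup>2)\<^sup>2))" using sq3[of "u\<^sup>2" "v\<^sup>2" "w\<^sup>2"] by simp
  also have "\<dots> = 27 * (u ^ 4 + v ^ 4 + w ^ 4)" by simp
  finally show ?thesis .
qed

section \<open>Half squared differences of responses\<close>

locale training_responses = prob_space P for P :: "'w measure" +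
  fixes S :: "nat \<Rightarrow> 'a" and Y Ys :: "nat \<Rightarrow> 'w \<Rightarrow> real" and M :: nat
    and f rho2 alpha4 :: "'a \<Rightarrow> real" and C :: real
  assumes Y_measurable[measurable]: "\<And>n. n \<ge> 1 \<Longrightarrow> Y n \<in> borel_measurable P"
    and Y_integrable: "\<And>n. n \<ge> 1 \<Longrightarrow> integrable P (Y n) \<and> integrable P (\<lambda>\<omega>. (Y n \<omega>)\<^sup>2)
        \<and> integrable P (\<lambda>\<omega>. (Y n \<omega> - f (S n)) ^ 4)"
    and Y_mean: "\<And>n. n \<ge> 1 \<Longrightarrow> expectation (Y n) = f (S n)"
    and responses_indep: "indep_vars (\<lambda>_. borel) (case_sum Y Ys) (Inl ` {1..} \<union> Inr ` {1..M})"
    and Y_variance: "\<And>n. n \<ge> 1 \<Longrightarrow> variance (Y n) = rho2 (S n)"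
    and alpha4_bounds: "\<And>s. 0 \<le> alpha4 s \<and> alpha4 s \<le> C"
    and Y_fourth_moment: "\<And>n. n \<ge> 1 \<Longrightarrow> expectation (\<lambda>\<omega>. (Y n \<omega> - f (S n)) ^ 4) = alpha4 (S n)"
begin

abbreviation response_events :: "'w set set" where
  "response_events \<equiv> {(\<lambda>\<omega>. \<lambda>i\<in>Inl ` {1..} \<union> Inr ` {1..M}. case_sum Y Ys i \<omega>) -` E \<inter> space P | E.
      E \<in> sets (Pi\<^sub>M (Inl ` {1..} \<union> Inr ` {1..M}) (\<lambda>_. borel))}"

definition half_sq_diff :: "nat \<Rightarrow> nat \<Rightarrow> 'w \<Rightarrow> real" where
  "half_sq_diff a b \<omega> = (Y a \<omega> - Y b \<omega>)\<^sup>2 / 2"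

lemma half_sq_diff_measurable[measurable]:
  "a \<ge> 1 \<Longrightarrow> b \<ge> 1 \<Longrightarrow> half_sq_diff a b \<in> borel_measurable P"
  unfolding half_sq_diff_def by measurable

lemma half_sq_diff_nonneg: "half_sq_diff a b \<omega> \<ge> 0"
  by (simp add: half_sq_diff_def)

lemma expectation_Y_mult:
  assumes "a \<ge> 1" "b \<ge> 1" "a \<noteq> b"
  shows "expectation (\<lambda>\<omega>. Y a \<omega> * Y b \<omega>) = expectation (Y a) * expectation (Y b)"
  using integral_mult_indep_restrict[OF responses_indep, of "{Inl a}" "{Inl b}"
      "\<lambda>x. x (Inl a)" "\<lambda>x. x (Inl b)"] assms Y_integrable
  by simp

lemma expectation_half_sq_diff:
  assumes "a \<ge> 1" "b \<ge> 1" "a \<noteq> b"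
  shows "expectation (half_sq_diff a b) = (rho2 (S a) + rho2 (S b) + (f (S a) - f (S b))\<^sup>2) / 2"
proof -
  have ia: "integrable P (Y a)" "integrable P (\<lambda>\<omega>. (Y a \<omega>)\<^sup>2)" using Y_integrable[OF assms(1)] by auto
  have ib: "integrable P (Y b)" "integrable P (\<lambda>\<omega>. (Y b \<omega>)\<^sup>2)" using Y_integrable[OF assms(2)] by auto
  have iab: "integrable P (\<lambda>\<omega>. Y a \<omega> * Y b \<omega>)"
    using assms ia ib by (intro integrable_mult_of_square_integrable) auto
  have "half_sq_diff a b = (\<lambda>\<omega>. ((Y a \<omega>)\<^sup>2 + (Y b \<omega>)\<^sup>2 - 2 * (Y a \<omega> * Y b \<omega>)) / 2)"
    by (auto simp: half_sq_diff_def power2_diff algebra_simps)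
  then have "expectation (half_sq_diff a b) = (expectation (\<lambda>\<omega>. (Y a \<omega>)\<^sup>2)
      + expectation (\<lambda>\<omega>. (Y b \<omega>)\<^sup>2) - 2 * expectation (\<lambda>\<omega>. Y a \<omega> * Y b \<omega>)) / 2"
    using ia ib iab by simp
  also have "\<dots> = (rho2 (S a) + rho2 (S b) + (f (S a) - f (S b))\<^sup>2) / 2"
    using variance_eq[OF ia] variance_eq[OF ib] Y_variance[OF assms(1)] Y_variance[OF assms(2)]
      Y_mean[OF assms(1)] Y_mean[OF assms(2)] expectation_Y_mult[OF assms]
    by (simp add: power2_diff)
  finally show ?thesis .
qed

lemma expectation_half_sq_diff_close:
  assumes "a \<ge> 1" "b \<ge> 1" "a \<noteq> b"
    and "\<bar>rho2 (S a) - c\<bar> \<le> \<epsilon> / 4" "\<bar>rho2 (S b) - c\<bar> \<le> \<epsilon> / 4" "(f (S a) - f (S b))\<^sup>2 \<le> \<epsilon> / 2"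
  shows "\<bar>expectation (half_sq_diff a b) - c\<bar> \<le> \<epsilon> / 2"
proof -
  have "\<bar>(x + y + d) / 2 - c\<bar> \<le> \<epsilon> / 2"
    if "\<bar>x - c\<bar> \<le> \<epsilon> / 4" "\<bar>y - c\<bar> \<le> \<epsilon> / 4" "0 \<le> d" "d \<le> \<epsilon> / 2" for x y d :: real
    using that abs_le_D1[OF that(1)] abs_le_D2[OF that(1)] abs_le_D1[OF that(2)] abs_le_D2[OF that(2)]
    by (simp add: abs_le_iff field_simps)
  then show ?thesis
    using assms(4-6) zero_le_power2[of "f (S a) - f (S b)"]
    unfolding expectation_half_sq_diff[OF assms(1-3)] by blast
qed

lemma half_sq_diff_square:
  assumes "a \<ge> 1" "b \<ge> 1"
  shows integrable_half_sq_diff_square: "integrable P (\<lambda>\<omega>. (half_sq_diff a b \<omega>)\<^sup>2)"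
    and expectation_half_sq_diff_square_le:
      "expectation (\<lambda>\<omega>. (half_sq_diff a b \<omega>)\<^sup>2) \<le> 27 / 4 * (2 * C + (f (S a) - f (S b)) ^ 4)"
proof -
  define \<Delta> where "\<Delta> = f (S a) - f (S b)"
  define bound where "bound \<omega> = 27 / 4 * ((Y a \<omega> - f (S a)) ^ 4 + (Y b \<omega> - f (S b)) ^ 4 + \<Delta> ^ 4)" for \<omega>
  have le: "(half_sq_diff a b \<omega>)\<^sup>2 \<le> bound \<omega>" for \<omega>
  proof -
    have "(half_sq_diff a b \<omega>)\<^sup>2 = ((Y a \<omega> - f (S a)) + (f (S b) - Y b \<omega>) + \<Delta>) ^ 4 / 4"
      by (simp add: half_sq_diff_def \<Delta>_def power2_eq_square power4_eq_xxxx)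
    also have "\<dots> \<le> 27 * ((Y a \<omega> - f (S a)) ^ 4 + (f (S b) - Y b \<omega>) ^ 4 + \<Delta> ^ 4) / 4"
      by (intro divide_right_mono power4_sum3_le) simp
    finally show ?thesis by (simp add: bound_def power4_eq_xxxx algebra_simps)
  qed
  have ib: "integrable P bound"
    using Y_integrable[OF assms(1)] Y_integrable[OF assms(2)] by (simp add: bound_def[abs_def])
  have "AE \<omega> in P. norm ((half_sq_diff a b \<omega>)\<^sup>2) \<le> norm (bound \<omega>)"
    using order_trans[OF le abs_ge_self] by (intro AE_I2) simp
  then show i: "integrable P (\<lambda>\<omega>. (half_sq_diff a b \<omega>)\<^sup>2)"
    using assms by (intro Bochner_Integration.integrable_bound[OF ib]) simp_all
  have "expectation (\<lambda>\<omega>. (half_sq_diff a b \<omega>)\<^sup>2) \<le> expectation bound"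
    using le by (intro integral_mono[OF i ib])
  also have "\<dots> = 27 / 4 * (alpha4 (S a) + alpha4 (S b) + \<Delta> ^ 4)"
    using Y_integrable[OF assms(1)] Y_integrable[OF assms(2)] Y_fourth_moment assms prob_space
    by (simp add: bound_def[abs_def])
  also have "\<dots> \<le> 27 / 4 * (2 * C + \<Delta> ^ 4)"
    using alpha4_bounds[of "S a"] alpha4_bounds[of "S b"] by simp
  finally show "expectation (\<lambda>\<omega>. (half_sq_diff a b \<omega>)\<^sup>2) \<le> 27 / 4 * (2 * C + (f (S a) - f (S b)) ^ 4)"
    by (simp add: \<Delta>_def)
qed

lemma integrable_half_sq_diff: "a \<ge> 1 \<Longrightarrow> b \<ge> 1 \<Longrightarrow> integrable P (half_sq_diff a b)"
  by (rule square_integrable_imp_integrable[OF half_sq_diff_measurable integrable_half_sq_diff_square])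

lemma expectation_half_sq_diff_mult:
  assumes "a \<ge> 1" "b \<ge> 1" "c \<ge> 1" "d \<ge> 1" "{a, b} \<inter> {c, d} = {}"
  shows "expectation (\<lambda>\<omega>. half_sq_diff a b \<omega> * half_sq_diff c d \<omega>) =
      expectation (half_sq_diff a b) * expectation (half_sq_diff c d)"
proof -
  have G: "(\<lambda>x::nat+nat\<Rightarrow>real. (x (Inl a) - x (Inl b))\<^sup>2 / 2) \<in> borel_measurable (Pi\<^sub>M {Inl a, Inl b} (\<lambda>_. borel))"
    and H: "(\<lambda>x::nat+nat\<Rightarrow>real. (x (Inl c) - x (Inl d))\<^sup>2 / 2) \<in> borel_measurable (Pi\<^sub>M {Inl c, Inl d} (\<lambda>_. borel))"
    by measurable
  show ?thesis
    using integral_mult_indep_restrict[OF responses_indep _ _ _ G H]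
      integrable_half_sq_diff[of a b] integrable_half_sq_diff[of c d] assms
    by (simp add: half_sq_diff_def[abs_def])
qed

lemma covariance_half_sq_diff_le:
  assumes "a \<ge> 1" "b \<ge> 1" "c \<ge> 1" "d \<ge> 1"
    and "expectation (\<lambda>\<omega>. (half_sq_diff a b \<omega>)\<^sup>2) \<le> B"
    and "expectation (\<lambda>\<omega>. (half_sq_diff c d \<omega>)\<^sup>2) \<le> B"
  shows "expectation (\<lambda>\<omega>. half_sq_diff a b \<omega> * half_sq_diff c d \<omega>)
      - expectation (half_sq_diff a b) * expectation (half_sq_diff c d) \<le> B"
proof -
  have sq: "integrable P (\<lambda>\<omega>. (half_sq_diff a b \<omega>)\<^sup>2)" "integrable P (\<lambda>\<omega>. (half_sq_diff c d \<omega>)\<^sup>2)"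
    using assms by (simp_all add: integrable_half_sq_diff_square)
  have "half_sq_diff a b \<omega> * half_sq_diff c d \<omega> \<le> ((half_sq_diff a b \<omega>)\<^sup>2 + (half_sq_diff c d \<omega>)\<^sup>2) / 2"
    for \<omega> using zero_le_power2[of "half_sq_diff a b \<omega> - half_sq_diff c d \<omega>"] by (simp add: power2_diff)
  then have "expectation (\<lambda>\<omega>. half_sq_diff a b \<omega> * half_sq_diff c d \<omega>)
      \<le> expectation (\<lambda>\<omega>. ((half_sq_diff a b \<omega>)\<^sup>2 + (half_sq_diff c d \<omega>)\<^sup>2) / 2)"
    using assms sq by (intro integral_mono integrable_mult_of_square_integrable) auto
  also have "\<dots> \<le> B" using assms sq by simp
  moreover have "0 \<le> expectation (half_sq_diff a b) * expectation (half_sq_diff c d)"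
    by (intro mult_nonneg_nonneg integral_nonneg_AE) (simp_all add: half_sq_diff_nonneg)
  ultimately show ?thesis by linarith
qed

text \<open>A term is correlated only with the terms sharing one of its two indices, and there are at
  most 2 + 2 K of those.\<close>

lemma variance_sum_half_sq_diff_le:
  assumes "finite A"
    and \<zeta>: "\<And>n. n \<in> A \<Longrightarrow> n \<ge> 1 \<and> \<zeta> n \<ge> 1"
    and fibres: "\<And>x. card {n\<in>A. \<zeta> n = x} \<le> K"
    and second_moment: "\<And>n. n \<in> A \<Longrightarrow> expectation (\<lambda>\<omega>. (half_sq_diff n (\<zeta> n) \<omega>)\<^sup>2) \<le> B"
    and "B \<ge> 0"
  shows "variance (\<lambda>\<omega>. \<Sum>n\<in>A. half_sq_diff n (\<zeta> n) \<omega>) \<le> B * ((2 + 2 * real K) * card A)"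
proof -
  let ?D = "{(i, j). {i, \<zeta> i} \<inter> {j, \<zeta> j} \<noteq> {}}"
  have "variance (\<lambda>\<omega>. \<Sum>n\<in>A. half_sq_diff n (\<zeta> n) \<omega>) \<le> B * card (?D \<inter> A \<times> A)"
    using assms(1) \<open>B \<ge> 0\<close> \<zeta> second_moment
    by (intro variance_sum_le_card_dependent expectation_half_sq_diff_mult covariance_half_sq_diff_le)
       (auto simp: integrable_half_sq_diff_square)
  also have "?D \<inter> A \<times> A = {(i, j) \<in> A \<times> A. {i, \<zeta> i} \<inter> {j, \<zeta> j} \<noteq> {}}" by auto
  also have "B * card \<dots> \<le> B * ((2 + 2 * real K) * card A)"
    using mult_left_mono[OF of_nat_mono[OF card_overlapping_pairs_le[OF assms(1) fibres]] \<open>B \<ge> 0\<close>]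
    by (simp add: algebra_simps)
  finally show ?thesis .
qed

lemma prob_average_half_sq_diff_far_le:
  assumes "finite A" "A \<noteq> {}"
    and \<zeta>: "\<And>n. n \<in> A \<Longrightarrow> n \<ge> 1 \<and> \<zeta> n \<ge> 1 \<and> \<zeta> n \<noteq> n"
    and fibres: "\<And>x. card {n\<in>A. \<zeta> n = x} \<le> K"
    and mean: "\<And>n. n \<in> A \<Longrightarrow> \<bar>expectation (half_sq_diff n (\<zeta> n)) - c\<bar> \<le> \<epsilon> / 2"
    and second_moment: "\<And>n. n \<in> A \<Longrightarrow> expectation (\<lambda>\<omega>. (half_sq_diff n (\<zeta> n) \<omega>)\<^sup>2) \<le> B"
    and "B \<ge> 0" "\<epsilon> > 0"
  shows "prob {\<omega> \<in> space P. \<epsilon> < \<bar>(\<Sum>n\<in>A. half_sq_diff n (\<zeta> n) \<omega>) / card A - c\<bar>}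
      \<le> 4 * B * (2 + 2 * K) / (\<epsilon>\<^sup>2 * card A)"
proof -
  define t where "t = real (card A)"
  have t: "t > 0" using assms(1,2) by (simp add: t_def card_gt_0_iff)
  define Z where "Z \<omega> = (\<Sum>n\<in>A. half_sq_diff n (\<zeta> n) \<omega>)" for \<omega>
  have Z: "Z \<in> borel_measurable P" and Z2: "integrable P (\<lambda>\<omega>. (Z \<omega>)\<^sup>2)"
    unfolding Z_def using assms(1) \<zeta>
    by (auto intro!: borel_measurable_sum integrable_square_sum simp: integrable_half_sq_diff_square)
  have var: "variance Z \<le> B * ((2 + 2 * real K) * t)"
    unfolding Z_def[abs_def] t_def using \<zeta>
    by (intro variance_sum_half_sq_diff_le[OF assms(1) _ fibres second_moment \<open>B \<ge> 0\<close>]) auto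
  have "\<bar>expectation Z - t * c\<bar> \<le> t * \<epsilon> / 2"
  proof -
    have "expectation Z = (\<Sum>n\<in>A. expectation (half_sq_diff n (\<zeta> n)))"
      unfolding Z_def using \<zeta> by (intro Bochner_Integration.integral_sum) (auto simp: integrable_half_sq_diff)
    then have "\<bar>expectation Z - t * c\<bar> = \<bar>\<Sum>n\<in>A. expectation (half_sq_diff n (\<zeta> n)) - c\<bar>"
      by (simp add: t_def sum_subtractf)
    also have "\<dots> \<le> (\<Sum>n\<in>A. \<epsilon> / 2)"
      using mean by (intro order_trans[OF sum_abs sum_mono])
    finally show ?thesis by (simp add: t_def)
  qed
  then have "prob {\<omega> \<in> space P. t * \<epsilon> < \<bar>Z \<omega> - t * c\<bar>} \<le> 4 * variance Z / (t * \<epsilon>)\<^sup>2"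
    using t \<open>\<epsilon> > 0\<close> by (intro prob_abs_diff_gt_le_variance[OF Z Z2]) auto
  also have "\<dots> \<le> 4 * (B * ((2 + 2 * real K) * t)) / (t * \<epsilon>)\<^sup>2"
    using var by (intro divide_right_mono) auto
  also have "\<dots> = 4 * B * (2 + 2 * real K) / (\<epsilon>\<^sup>2 * t)"
    using t \<open>\<epsilon> > 0\<close> by (simp add: field_simps power2_eq_square)
  also have "{\<omega> \<in> space P. t * \<epsilon> < \<bar>Z \<omega> - t * c\<bar>} =
      {\<omega> \<in> space P. \<epsilon> < \<bar>(\<Sum>n\<in>A. half_sq_diff n (\<zeta> n) \<omega>) / card A - c\<bar>}"
  proof -
    have "t * \<epsilon> < \<bar>Z \<omega> - t * c\<bar> \<longleftrightarrow> \<epsilon> < \<bar>Z \<omega> / t - c\<bar>" for \<omega>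
    proof -
      have "Z \<omega> / t - c = (Z \<omega> - t * c) / t" using t by (simp add: field_simps)
      then have "\<bar>Z \<omega> / t - c\<bar> = \<bar>Z \<omega> - t * c\<bar> / t" using t by simp
      then show ?thesis using t by (simp add: pos_less_divide_eq mult.commute)
    qed
    then show ?thesis by (simp add: Z_def t_def)
  qed
  finally show ?thesis by (simp add: t_def)
qed

lemma average_half_sq_diff_event_mem:
  assumes "finite A" and "\<And>n. n \<in> A \<Longrightarrow> n \<ge> 1 \<and> \<zeta> n \<ge> 1"
  shows "{\<omega> \<in> space P. \<epsilon> < \<bar>(\<Sum>n\<in>A. half_sq_diff n (\<zeta> n) \<omega>) / card A - c\<bar>} \<in> response_events"
proof -
  let ?I = "Inl ` {1..} \<union> Inr ` {1..M} :: (nat + nat) set"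
  define h where "h x = (\<Sum>n\<in>A. (x (Inl n) - x (Inl (\<zeta> n)))\<^sup>2 / 2) / card A - c" for x :: "nat + nat \<Rightarrow> real"
  have component: "(\<lambda>x. x (Inl n)) \<in> borel_measurable (Pi\<^sub>M ?I (\<lambda>_. borel))" if "n \<ge> 1" for n
    using that by (intro measurable_component_singleton) auto
  have "h \<in> borel_measurable (Pi\<^sub>M ?I (\<lambda>_. borel))"
    unfolding h_def by (intro borel_measurable_diff borel_measurable_divide borel_measurable_sum
        borel_measurable_power borel_measurable_const) (use component assms(2) in auto)
  then have "{x \<in> space (Pi\<^sub>M ?I (\<lambda>_. borel)). \<epsilon> < \<bar>h x\<bar>} \<in> sets (Pi\<^sub>M ?I (\<lambda>_. borel))"
    by measurable
  moreover have "{\<omega> \<in> space P. \<epsilon> < \<bar>(\<Sum>n\<in>A. half_sq_diff n (\<zeta> n) \<omega>) / card A - c\<bar>} =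
      (\<lambda>\<omega>. \<lambda>i\<in>?I. case_sum Y Ys i \<omega>) -` {x \<in> space (Pi\<^sub>M ?I (\<lambda>_. borel)). \<epsilon> < \<bar>h x\<bar>} \<inter> space P"
  proof -
    have "h (\<lambda>i\<in>?I. case_sum Y Ys i \<omega>) = (\<Sum>n\<in>A. half_sq_diff n (\<zeta> n) \<omega>) / card A - c" for \<omega>
      unfolding h_def half_sq_diff_def using assms(2) by (intro arg_cong2[where f="(-)"]
          arg_cong2[where f="(/)"] sum.cong) auto
    then show ?thesis by (auto simp: space_PiM)
  qed
  ultimately show ?thesis by blast
qed

end

section \<open>The estimator\<close>

lemma kPLP_diag:
  assumes "nb N m \<subseteq> {1..N}"
  shows "kPLP k nb z y N m m = (\<Sum>n\<in>nb N m. Lam y z N n) / real (k N)"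
proof -
  have "(\<Sum>n\<in>{1..N}. Psi k nb N m n * Lam y z N n * Psi k nb N m n)
      = (\<Sum>n\<in>{1..N}. if n \<in> nb N m then Lam y z N n / (real (k N))\<^sup>2 else 0)"
    by (rule sum.cong) (auto simp: Psi_def power2_eq_square)
  also have "\<dots> = (\<Sum>n\<in>nb N m. Lam y z N n) / (real (k N))\<^sup>2"
    using assms by (simp add: sum.If_cases Int_absorb1 sum_divide_distrib)
  finally show ?thesis unfolding kPLP_def by (simp add: power2_eq_square)
qed

lemma kPLP_offdiag: "nb N m \<inter> nb N m' = {} \<Longrightarrow> kPLP k nb z y N m m' = 0"
  unfolding kPLP_def Psi_def by (intro mult_eq_0_iff[THEN iffD2] disjI2 sum.neutral) auto

lemma tie_breaking_event_mem:
  fixes P :: "'w measure" and nb :: "nat \<Rightarrow> nat \<Rightarrow> 'w \<Rightarrow> nat set" and z :: "nat \<Rightarrow> nat \<Rightarrow> 'w \<Rightarrow> nat"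
  shows "{\<omega> \<in> space P. nb N m \<omega> = A \<and> (\<forall>n\<in>{1..N}. z N n \<omega> = \<zeta> n)} \<in>
    {(\<lambda>\<omega>. (\<lambda>N m. nb N m \<omega>, \<lambda>N n. z N n \<omega>)) -` F \<inter> space P | F.
       F \<in> sets (Pi\<^sub>M UNIV (\<lambda>N. Pi\<^sub>M UNIV (\<lambda>m. count_space UNIV)) \<Otimes>\<^sub>M
                  Pi\<^sub>M UNIV (\<lambda>N. Pi\<^sub>M UNIV (\<lambda>n. count_space UNIV)))}"
proof -
  let ?\<Omega> = "Pi\<^sub>M UNIV (\<lambda>N. Pi\<^sub>M UNIV (\<lambda>m. count_space UNIV)) \<Otimes>\<^sub>M
      Pi\<^sub>M UNIV (\<lambda>N. Pi\<^sub>M UNIV (\<lambda>n. count_space UNIV))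
      :: ((nat \<Rightarrow> nat \<Rightarrow> nat set) \<times> (nat \<Rightarrow> nat \<Rightarrow> nat)) measure"
  define F where "F = {x \<in> space ?\<Omega>. fst x N m = A \<and> (\<forall>n\<in>{1..N}. snd x N n = \<zeta> n)}"
  have component: "(\<lambda>g. g i) \<in> Pi\<^sub>M UNIV (\<lambda>_. count_space UNIV) \<rightarrow>\<^sub>M count_space UNIV" for i :: nat
    by (rule measurable_component_singleton[where M="\<lambda>_. count_space UNIV", simplified]) simp
  have row: "(\<lambda>g. g N) \<in> Pi\<^sub>M UNIV (\<lambda>N. Pi\<^sub>M UNIV (\<lambda>_. count_space UNIV)) \<rightarrow>\<^sub>M
      Pi\<^sub>M UNIV (\<lambda>_. count_space UNIV)" for N :: nat
    by (rule measurable_component_singleton) simp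
  have [measurable]: "(\<lambda>x. fst x N m) \<in> ?\<Omega> \<rightarrow>\<^sub>M count_space UNIV"
    "(\<lambda>x. snd x N n) \<in> ?\<Omega> \<rightarrow>\<^sub>M count_space UNIV" for n
    by (rule measurable_compose[OF measurable_compose[OF measurable_fst row] component]
        measurable_compose[OF measurable_compose[OF measurable_snd row] component])+
  have "F \<in> sets ?\<Omega>"
    unfolding F_def by measurable
  moreover have "{\<omega> \<in> space P. nb N m \<omega> = A \<and> (\<forall>n\<in>{1..N}. z N n \<omega> = \<zeta> n)} =
      (\<lambda>\<omega>. (\<lambda>N m. nb N m \<omega>, \<lambda>N n. z N n \<omega>)) -` F \<inter> space P"
    by (auto simp: F_def space_pair_measure space_PiM PiE_UNIV_domain)
  ultimately show ?thesis by blast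
qed

lemma disjoint_family_on_tie_breaking_events:
  "disjoint_family_on (\<lambda>(A, \<zeta>). {\<omega> \<in> space P. nb N m \<omega> = A \<and> (\<forall>n\<in>{1..N}. z N n \<omega> = \<zeta> n)})
     (X \<times> (\<Pi>\<^sub>E n\<in>{1..N}. Z n))"
  unfolding disjoint_family_on_def
proof (intro ballI impI equals0I)
  fix i j \<omega> assume "i \<in> X \<times> (\<Pi>\<^sub>E n\<in>{1..N}. Z n)" "j \<in> X \<times> (\<Pi>\<^sub>E n\<in>{1..N}. Z n)" "i \<noteq> j"
    and \<omega>: "\<omega> \<in> (case i of (A, \<zeta>) \<Rightarrow> {\<omega> \<in> space P. nb N m \<omega> = A \<and> (\<forall>n\<in>{1..N}. z N n \<omega> = \<zeta> n)})
      \<inter> (case j of (A, \<zeta>) \<Rightarrow> {\<omega> \<in> space P. nb N m \<omega> = A \<and> (\<forall>n\<in>{1..N}. z N n \<omega> = \<zeta> n)})"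
  then obtain A \<zeta> A' \<zeta>' where ij: "i = (A, \<zeta>)" "j = (A', \<zeta>')"
    and \<zeta>: "\<zeta> \<in> (\<Pi>\<^sub>E n\<in>{1..N}. Z n)" "\<zeta>' \<in> (\<Pi>\<^sub>E n\<in>{1..N}. Z n)"
    by auto
  have "A = A'" using \<omega> by (auto simp: ij)
  moreover have "\<zeta> = \<zeta>'" using \<omega> by (intro PiE_ext[OF \<zeta>]) (auto simp: ij)
  ultimately show False using \<open>i \<noteq> j\<close> ij by simp
qed

locale knn_estimator =
  adaptive_knn S Sstar M a k + training_responses P S Y Ys M f rho2 alpha4 C
  for S Sstar :: "nat \<Rightarrow> 'a::metric_space" and M :: nat and a :: "nat \<Rightarrow> real" and k :: "nat \<Rightarrow> nat"
    and P :: "'w measure" and Y Ys :: "nat \<Rightarrow> 'w \<Rightarrow> real" and f rho2 alpha4 :: "'a \<Rightarrow> real"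
    and C :: real +
  fixes L :: real and K :: nat
    and nb :: "nat \<Rightarrow> nat \<Rightarrow> 'w \<Rightarrow> nat set" and z :: "nat \<Rightarrow> nat \<Rightarrow> 'w \<Rightarrow> nat"
  assumes nn_indegree: "\<And>(X::'a set) y. finite X \<Longrightarrow> y \<notin> X \<Longrightarrow>
      (\<forall>x\<in>X. \<forall>x'\<in>X. x' \<noteq> x \<longrightarrow> dist x y \<le> dist x x') \<Longrightarrow> card X \<le> K"
    and targets_distinct: "inj_on Sstar {1..M}"
    and training_distinct: "inj_on S {1..}"
    and f_lipschitz: "L-lipschitz_on UNIV f"
    and rho2_continuous: "continuous_on UNIV rho2"
    and nb_valid: "\<And>N m \<omega>. N \<ge> 1 \<Longrightarrow> m \<in> {1..M} \<Longrightarrow> \<omega> \<in> space P \<Longrightarrow>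
        nb N m \<omega> \<in> knn_sets S (Sstar m) N (k N)"
    and z_valid: "\<And>N n \<omega>. N \<ge> 2 \<Longrightarrow> n \<in> {1..N} \<Longrightarrow> \<omega> \<in> space P \<Longrightarrow> z N n \<omega> \<in> nn_idx S N n"
    and tie_breaking_indep: "indep_set
        {(\<lambda>\<omega>. \<lambda>i\<in>Inl ` {1..} \<union> Inr ` {1..M}. case_sum Y Ys i \<omega>) -` E \<inter> space P | E.
           E \<in> sets (Pi\<^sub>M (Inl ` {1..} \<union> Inr ` {1..M}) (\<lambda>_. borel))}
        {(\<lambda>\<omega>. (\<lambda>N m. nb N m \<omega>, \<lambda>N n. z N n \<omega>)) -` F \<inter> space P | F.
           F \<in> sets (Pi\<^sub>M UNIV (\<lambda>N. Pi\<^sub>M UNIV (\<lambda>m. count_space UNIV)) \<Otimes>\<^sub>M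
                      Pi\<^sub>M UNIV (\<lambda>N. Pi\<^sub>M UNIV (\<lambda>n. count_space UNIV)))}"
begin

definition estimate :: "nat \<Rightarrow> nat \<Rightarrow> nat \<Rightarrow> 'w \<Rightarrow> real" where
  "estimate N m m' \<omega> = kPLP k (\<lambda>N m. nb N m \<omega>) (\<lambda>N n. z N n \<omega>) (\<lambda>n. Y n \<omega>) N m m'"

lemma eventually_estimate_offdiag_eq_0:
  assumes m: "m \<in> {1..M}" and m': "m' \<in> {1..M}" and "m \<noteq> m'"
  shows "eventually (\<lambda>N. \<forall>\<omega>\<in>space P. estimate N m m' \<omega> = 0) sequentially"
proof -
  define \<eta> where "\<eta> = dist (Sstar m) (Sstar m') / 3"
  have "Sstar m \<noteq> Sstar m'" using targets_distinct m m' \<open>m \<noteq> m'\<close> by (auto dest: inj_onD)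
  then have "\<eta> > 0" by (simp add: \<eta>_def)
  show ?thesis
    using eventually_conj[OF eventually_knn_close[OF \<open>\<eta> > 0\<close>] eventually_ge_at_top[of 1]]
  proof eventually_elim
    case (elim N)
    have "nb N m \<omega> \<inter> nb N m' \<omega> = {}" if \<omega>: "\<omega> \<in> space P" for \<omega>
    proof (rule equals0I)
      fix n assume "n \<in> nb N m \<omega> \<inter> nb N m' \<omega>"
      then have "dist (Sstar m) (S n) \<le> \<eta>" "dist (Sstar m') (S n) \<le> \<eta>"
        using elim nb_valid[OF _ m \<omega>] nb_valid[OF _ m' \<omega>] m m' by blast+
      then show False
        using dist_triangle2[of "Sstar m" "Sstar m'" "S n"] \<open>\<eta> > 0\<close> unfolding \<eta>_def by linarith
    qed
    then show ?case by (simp add: estimate_def kPLP_offdiag)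
  qed
qed

lemma estimate_diag:
  assumes "N \<ge> 1" "m \<in> {1..M}" "\<omega> \<in> space P"
  shows "estimate N m m \<omega> = (\<Sum>n\<in>nb N m \<omega>. half_sq_diff n (z N n \<omega>) \<omega>) / card (nb N m \<omega>)"
proof -
  have A: "nb N m \<omega> \<in> knn_sets S (Sstar m) N (k N)" using nb_valid[OF assms] .
  show ?thesis
    unfolding estimate_def kPLP_diag[where nb="\<lambda>N m. nb N m \<omega>", OF knn_sets_subset[OF A]]
    by (simp add: knn_sets_card[OF A] Lam_def half_sq_diff_def)
qed

lemma obtain_diag_radius:
  assumes "\<epsilon> > 0"
  obtains \<eta> where "0 < \<eta>" "\<eta> \<le> 1" "\<And>s. dist s s0 \<le> 3 * \<eta> \<Longrightarrow> \<bar>rho2 s - rho2 s0\<bar> \<le> \<epsilon> / 4"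
    "(2 * L * \<eta>)\<^sup>2 \<le> \<epsilon> / 2"
proof -
  obtain \<delta> where \<delta>: "\<delta> > 0" "\<And>s. dist s s0 < \<delta> \<Longrightarrow> \<bar>rho2 s - rho2 s0\<bar> < \<epsilon> / 4"
    using rho2_continuous assms unfolding continuous_on_iff
    by (metis UNIV_I dist_real_def zero_less_divide_iff zero_less_numeral)
  have L: "L \<ge> 0" using f_lipschitz by (rule lipschitz_on_nonneg)
  define \<eta> where "\<eta> = min 1 (min (\<delta> / 4) (sqrt (\<epsilon> / 2) / (2 * L + 1)))"
  have "0 < \<eta>" using \<delta> assms L by (simp add: \<eta>_def)
  moreover have "\<eta> \<le> 1" by (simp add: \<eta>_def)
  moreover have "\<bar>rho2 s - rho2 s0\<bar> \<le> \<epsilon> / 4" if "dist s s0 \<le> 3 * \<eta>" for s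
  proof -
    have "\<eta> \<le> \<delta> / 4" unfolding \<eta>_def by (rule order_trans[OF min.cobounded2 min.cobounded1])
    then have "dist s s0 < \<delta>" using that \<delta>(1) by linarith
    then show ?thesis using \<delta>(2) less_imp_le by blast
  qed
  moreover have "(2 * L * \<eta>)\<^sup>2 \<le> \<epsilon> / 2"
  proof -
    have "2 * L * \<eta> \<le> (2 * L + 1) * (sqrt (\<epsilon> / 2) / (2 * L + 1))"
      using L \<open>0 < \<eta>\<close> by (intro mult_mono) (auto simp: \<eta>_def)
    then have "2 * L * \<eta> \<le> sqrt (\<epsilon> / 2)" using L by simp
    then have "(2 * L * \<eta>)\<^sup>2 \<le> (sqrt (\<epsilon> / 2))\<^sup>2"
      using L \<open>0 < \<eta>\<close> by (intro power_mono) auto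
    then show ?thesis using assms by simp
  qed
  ultimately show ?thesis using that by blast
qed

abbreviation tie_events :: "'w set set" where
  "tie_events \<equiv> {(\<lambda>\<omega>. (\<lambda>N m. nb N m \<omega>, \<lambda>N n. z N n \<omega>)) -` F \<inter> space P | F.
      F \<in> sets (Pi\<^sub>M UNIV (\<lambda>N. Pi\<^sub>M UNIV (\<lambda>m. count_space UNIV)) \<Otimes>\<^sub>M
                 Pi\<^sub>M UNIV (\<lambda>N. Pi\<^sub>M UNIV (\<lambda>n. count_space UNIV)))}"

text \<open>For a fixed tie-breaking outcome each term has mean within \<epsilon> / 2 of rho2 at the target,
  and its second moment is bounded through the Lipschitz constant of f.\<close>

lemma prob_block_average_far_le:
  assumes "N \<ge> 2" "k N \<ge> 2" "m \<in> {1..M}" and \<epsilon>: "\<epsilon> > 0"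
    and A: "A \<in> knn_sets S (Sstar m) N (k N)"
    and \<zeta>: "\<And>n. n \<in> {1..N} \<Longrightarrow> \<zeta> n \<in> nn_idx S N n"
    and close: "\<And>n. n \<in> A \<Longrightarrow> dist (Sstar m) (S n) \<le> \<eta>"
    and "\<eta> \<le> 1"
    and rho2_close: "\<And>s. dist s (Sstar m) \<le> 3 * \<eta> \<Longrightarrow> \<bar>rho2 s - rho2 (Sstar m)\<bar> \<le> \<epsilon> / 4"
    and L\<eta>: "(2 * L * \<eta>)\<^sup>2 \<le> \<epsilon> / 2"
  shows "prob {\<omega> \<in> space P. \<epsilon> < \<bar>(\<Sum>n\<in>A. half_sq_diff n (\<zeta> n) \<omega>) / card A - rho2 (Sstar m)\<bar>}
      \<le> 27 * (2 * C + (2 * L) ^ 4) * (2 + 2 * K) / (\<epsilon>\<^sup>2 * k N)"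
proof -
  note Asub = knn_sets_subset[OF A] and cA = knn_sets_card[OF A] and fA = knn_sets_finite[OF A]
  have "A \<noteq> {}" using cA \<open>k N \<ge> 2\<close> by auto
  then have \<eta>: "\<eta> \<ge> 0" using close zero_le_dist order_trans by blast
  have L: "L \<ge> 0" using f_lipschitz by (rule lipschitz_on_nonneg)
  have \<zeta>A: "n \<ge> 1 \<and> \<zeta> n \<ge> 1 \<and> \<zeta> n \<noteq> n" if "n \<in> A" for n
    using \<zeta>[of n] that Asub by (auto simp: nn_idx_def)
  have near: "dist (S n) (S (\<zeta> n)) \<le> 2 * \<eta>" if n: "n \<in> A" for n
  proof -
    obtain n' where "n' \<in> A" "n' \<noteq> n"
      using cA \<open>k N \<ge> 2\<close> n fA by (metis card_le_Suc0_iff_eq not_less_eq_eq numeral_2_eq_2)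
    then show ?thesis
      using \<zeta>[of n] n Asub close by (intro nn_idx_dist_le[of _ S N n n' "Sstar m"]) auto
  qed
  have \<Delta>: "\<bar>f (S n) - f (S (\<zeta> n))\<bar> \<le> 2 * L * \<eta>" if "n \<in> A" for n
  proof -
    have "dist (f (S n)) (f (S (\<zeta> n))) \<le> L * dist (S n) (S (\<zeta> n))"
      by (rule lipschitz_onD[OF f_lipschitz]) auto
    also have "\<dots> \<le> L * (2 * \<eta>)" using near[OF that] L by (intro mult_left_mono) auto
    finally show ?thesis by (simp add: dist_real_def)
  qed
  have "prob {\<omega> \<in> space P. \<epsilon> < \<bar>(\<Sum>n\<in>A. half_sq_diff n (\<zeta> n) \<omega>) / card A - rho2 (Sstar m)\<bar>}
      \<le> 4 * (27 / 4 * (2 * C + (2 * L) ^ 4)) * (2 + 2 * K) / (\<epsilon>\<^sup>2 * card A)"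
  proof (rule prob_average_half_sq_diff_far_le[OF fA \<open>A \<noteq> {}\<close> \<zeta>A])
    show "card {n\<in>A. \<zeta> n = x} \<le> K" for x
      using training_distinct Asub \<zeta> Asub
      by (intro nn_idx_fibre_card_le[OF nn_indegree]) (auto intro: inj_on_subset)
    show "0 \<le> 27 / 4 * (2 * C + (2 * L) ^ 4)"
      using alpha4_bounds[of "S 0"] by simp
  next
    fix n assume n: "n \<in> A"
    have "(f (S n) - f (S (\<zeta> n)))\<^sup>2 \<le> (2 * L * \<eta>)\<^sup>2"
      using \<Delta>[OF n] by (simp add: abs_le_square_iff[symmetric] abs_of_nonneg L \<eta>)
    moreover have "dist (S (\<zeta> n)) (Sstar m) \<le> 3 * \<eta>"
      using dist_triangle[of "S (\<zeta> n)" "Sstar m" "S n"] near[OF n] close[OF n]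
      by (simp add: dist_commute)
    ultimately show "\<bar>expectation (half_sq_diff n (\<zeta> n)) - rho2 (Sstar m)\<bar> \<le> \<epsilon> / 2"
      using \<zeta>A[OF n] close[OF n] \<eta> L\<eta> rho2_close
      by (intro expectation_half_sq_diff_close) (auto simp: dist_commute)
    have "\<bar>f (S n) - f (S (\<zeta> n))\<bar> \<le> 2 * L"
      using \<Delta>[OF n] \<open>\<eta> \<le> 1\<close> L by (smt (verit) mult_left_le)
    then have "(f (S n) - f (S (\<zeta> n))) ^ 4 \<le> (2 * L) ^ 4"
      by (metis abs_ge_zero power_even_abs power_mono even_numeral)
    then show "expectation (\<lambda>\<omega>. (half_sq_diff n (\<zeta> n) \<omega>)\<^sup>2) \<le> 27 / 4 * (2 * C + (2 * L) ^ 4)"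
      using expectation_half_sq_diff_square_le[of n "\<zeta> n"] \<zeta>A[OF n] by simp
  qed (simp_all add: \<epsilon>)
  also have "\<dots> = 27 * (2 * C + (2 * L) ^ 4) * (2 + 2 * K) / (\<epsilon>\<^sup>2 * k N)"
    using \<epsilon> \<open>k N \<ge> 2\<close> by (simp add: cA field_simps)
  finally show ?thesis .
qed

text \<open>Condition on the tie-breaking outcome, which is independent of the responses.\<close>

lemma prob_estimate_diag_far_le:
  assumes N: "N \<ge> 2" "k N \<ge> 2" and m: "m \<in> {1..M}" and "\<epsilon> > 0"
    and close: "\<forall>A\<in>knn_sets S (Sstar m) N (k N). \<forall>n\<in>A. dist (Sstar m) (S n) \<le> \<eta>"
    and \<eta>: "\<eta> \<le> 1" "\<And>s. dist s (Sstar m) \<le> 3 * \<eta> \<Longrightarrow> \<bar>rho2 s - rho2 (Sstar m)\<bar> \<le> \<epsilon> / 4"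
      "(2 * L * \<eta>)\<^sup>2 \<le> \<epsilon> / 2"
  shows "prob {\<omega> \<in> space P. \<epsilon> < \<bar>estimate N m m \<omega> - rho2 (Sstar m)\<bar>}
      \<le> 27 * (2 * C + (2 * L) ^ 4) * (2 + 2 * K) / (\<epsilon>\<^sup>2 * k N)"
proof -
  define I where "I = knn_sets S (Sstar m) N (k N) \<times> (\<Pi>\<^sub>E n\<in>{1..N}. nn_idx S N n)"
  define far where "far = (\<lambda>(A, \<zeta>). {\<omega> \<in> space P.
      \<epsilon> < \<bar>(\<Sum>n\<in>A. half_sq_diff n (\<zeta> n) \<omega>) / card A - rho2 (Sstar m)\<bar>})"
  define tie where "tie = (\<lambda>(A, \<zeta>). {\<omega> \<in> space P. nb N m \<omega> = A \<and> (\<forall>n\<in>{1..N}. z N n \<omega> = \<zeta> n)})"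
  have nn_idx_subset: "nn_idx S N n \<subseteq> {1..N}" for n by (auto simp: nn_idx_def)
  have far: "far i \<in> response_events \<and>
      prob (far i) \<le> 27 * (2 * C + (2 * L) ^ 4) * (2 + 2 * K) / (\<epsilon>\<^sup>2 * k N)" if "i \<in> I" for i
    using that unfolding I_def
  proof (elim SigmaE)
    fix A \<zeta> assume A: "A \<in> knn_sets S (Sstar m) N (k N)"
      and \<zeta>: "\<zeta> \<in> (\<Pi>\<^sub>E n\<in>{1..N}. nn_idx S N n)" and i: "i = (A, \<zeta>)"
    have "n \<ge> 1 \<and> \<zeta> n \<ge> 1" if "n \<in> A" for n
      using that knn_sets_subset[OF A] \<zeta> nn_idx_subset by (force simp: PiE_iff)
    then have "far i \<in> response_events"
      unfolding i far_def prod.case by (rule average_half_sq_diff_event_mem[OF knn_sets_finite[OF A]])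
    moreover have "prob (far i) \<le> 27 * (2 * C + (2 * L) ^ 4) * (2 + 2 * K) / (\<epsilon>\<^sup>2 * k N)"
      unfolding i far_def prod.case using \<zeta> close A
      by (intro prob_block_average_far_le[OF N m \<open>\<epsilon> > 0\<close> A _ _ \<eta>]) auto
    ultimately show ?thesis ..
  qed
  show ?thesis
  proof (rule prob_le_of_indep_cover[OF tie_breaking_indep])
    show "finite I"
      unfolding I_def using nn_idx_subset
      by (intro finite_SigmaI finite_knn_sets finite_PiE) (auto intro: finite_subset)
    show "far i \<in> response_events" "prob (far i) \<le> 27 * (2 * C + (2 * L) ^ 4) * (2 + 2 * K) / (\<epsilon>\<^sup>2 * k N)"
      if "i \<in> I" for i
      using far[OF that] by simp_all
    show "tie i \<in> tie_events" for i
      by (cases i) (simp only: tie_def prod.case tie_breaking_event_mem)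
    show "disjoint_family_on tie I"
      unfolding tie_def I_def by (rule disjoint_family_on_tie_breaking_events)
    show "{\<omega> \<in> space P. \<epsilon> < \<bar>estimate N m m \<omega> - rho2 (Sstar m)\<bar>} \<subseteq> (\<Union>i\<in>I. far i \<inter> tie i)"
    proof
      fix \<omega> assume \<omega>: "\<omega> \<in> {\<omega> \<in> space P. \<epsilon> < \<bar>estimate N m m \<omega> - rho2 (Sstar m)\<bar>}"
      define i where "i = (nb N m \<omega>, restrict (\<lambda>n. z N n \<omega>) {1..N})"
      have "i \<in> I" using \<omega> N nb_valid[OF _ m] z_valid by (auto simp: i_def I_def)
      have "nb N m \<omega> \<subseteq> {1..N}" using \<omega> N knn_sets_subset[OF nb_valid[OF _ m]] by simp
      then have "(\<Sum>n\<in>nb N m \<omega>. half_sq_diff n (restrict (\<lambda>n. z N n \<omega>) {1..N} n) \<omega>) =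
          (\<Sum>n\<in>nb N m \<omega>. half_sq_diff n (z N n \<omega>) \<omega>)"
        by (intro sum.cong) auto
      then have "\<omega> \<in> far i \<inter> tie i"
        using \<omega> N estimate_diag[OF _ m, of N \<omega>] by (simp add: i_def far_def tie_def)
      then show "\<omega> \<in> (\<Union>i\<in>I. far i \<inter> tie i)" using \<open>i \<in> I\<close> by blast
    qed
    show "0 \<le> 27 * (2 * C + (2 * L) ^ 4) * (2 + 2 * K) / (\<epsilon>\<^sup>2 * k N)"
      using alpha4_bounds[of "S 0"] by (intro divide_nonneg_nonneg mult_nonneg_nonneg) simp_all
  qed
qed

lemma estimate_diag_tendsto:
  assumes m: "m \<in> {1..M}" and "\<epsilon> > 0"
  shows "(\<lambda>N. prob {\<omega> \<in> space P. \<epsilon> < \<bar>estimate N m m \<omega> - rho2 (Sstar m)\<bar>}) \<longlonglongrightarrow> 0"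
proof -
  obtain \<eta> where \<eta>: "0 < \<eta>" "\<eta> \<le> 1"
    "\<And>s. dist s (Sstar m) \<le> 3 * \<eta> \<Longrightarrow> \<bar>rho2 s - rho2 (Sstar m)\<bar> \<le> \<epsilon> / 4" "(2 * L * \<eta>)\<^sup>2 \<le> \<epsilon> / 2"
    using obtain_diag_radius[OF \<open>\<epsilon> > 0\<close>] by metis
  define \<beta> where "\<beta> = 27 * (2 * C + (2 * L) ^ 4) * (2 + 2 * K) / \<epsilon>\<^sup>2"
  have ev: "eventually (\<lambda>N. prob {\<omega> \<in> space P. \<epsilon> < \<bar>estimate N m m \<omega> - rho2 (Sstar m)\<bar>} \<le> \<beta> / k N)
      sequentially"
    using eventually_conj[OF eventually_knn_close[OF \<eta>(1)]
        eventually_conj[OF eventually_ge_at_top[of 2] eventually_k_ge[of 2]]]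
  proof eventually_elim
    case (elim N)
    then have N: "N \<ge> 2" "k N \<ge> 2"
      and close: "\<forall>A\<in>knn_sets S (Sstar m) N (k N). \<forall>n\<in>A. dist (Sstar m) (S n) \<le> \<eta>"
      using m by auto
    show ?case
      using prob_estimate_diag_far_le[OF N m \<open>\<epsilon> > 0\<close> close \<eta>(2-4)] by (simp add: \<beta>_def)
  qed
  have "filterlim (\<lambda>N. real (k N)) at_infinity sequentially"
    using filterlim_compose[OF filterlim_real_sequentially filterlim_k]
    by (rule filterlim_at_top_imp_at_infinity)
  then have lim: "(\<lambda>N. \<beta> / k N) \<longlonglongrightarrow> 0"
    by (rule tendsto_divide_0[OF tendsto_const])
  show ?thesis
    by (rule tendsto_sandwich[OF always_eventually ev tendsto_const lim]) (simp add: measure_nonneg)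
qed

lemma estimate_tendsto:
  assumes "m \<in> {1..M}" "m' \<in> {1..M}" "\<epsilon> > 0"
  shows "(\<lambda>N. prob {\<omega> \<in> space P.
      \<epsilon> < \<bar>estimate N m m' \<omega> - (if m = m' then rho2 (Sstar m) else 0)\<bar>}) \<longlonglongrightarrow> 0"
proof (cases "m = m'")
  case False
  have "eventually (\<lambda>N. prob {\<omega> \<in> space P. \<epsilon> < \<bar>estimate N m m' \<omega> - 0\<bar>} = 0) sequentially"
    using eventually_estimate_offdiag_eq_0[OF assms(1,2) False]
  proof eventually_elim
    case (elim N)
    then have "{\<omega> \<in> space P. \<epsilon> < \<bar>estimate N m m' \<omega> - 0\<bar>} = {}" using \<open>\<epsilon> > 0\<close> by auto
    then show ?case by (metis measure_empty)
  qed
  then show ?thesis using False by (simp add: tendsto_eventually)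
qed (use estimate_diag_tendsto assms in simp)

end

theorem lemmaE3:
  fixes P :: "'w measure"
    and S Sstar :: "nat \<Rightarrow> real ^ 'd"
    and M :: nat
    and Y Ys :: "nat \<Rightarrow> 'w \<Rightarrow> real"
    and f rho2 alpha4 :: "real ^ 'd \<Rightarrow> real"
    and L BY C :: real
    and a :: "nat \<Rightarrow> real"
    and k :: "nat \<Rightarrow> nat"
    and nb :: "nat \<Rightarrow> nat \<Rightarrow> 'w \<Rightarrow> nat set"
    and z :: "nat \<Rightarrow> nat \<Rightarrow> 'w \<Rightarrow> nat"
  assumes P: "prob_space P"
    and dist_targets: "inj_on Sstar {1..M}"
    and dist_train: "inj_on S {1..}"
    and infill: "\<And>m U. m \<in> {1..M} \<Longrightarrow> open U \<Longrightarrow> Sstar m \<in> U \<Longrightarrow> infinite {n. n \<ge> 1 \<and> S n \<in> U}"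
    (* (A2) *)
    and rvY: "\<And>n. n \<ge> 1 \<Longrightarrow> Y n \<in> borel_measurable P"
    and rvYs: "\<And>m. m \<in> {1..M} \<Longrightarrow> Ys m \<in> borel_measurable P"
    and intY: "\<And>n. n \<ge> 1 \<Longrightarrow> integrable P (Y n) \<and> integrable P (\<lambda>\<omega>. (Y n \<omega>)\<^sup>2)
                   \<and> integrable P (\<lambda>\<omega>. (Y n \<omega> - f (S n)) ^ 4)"
    and intYs: "\<And>m. m \<in> {1..M} \<Longrightarrow> integrable P (Ys m) \<and> integrable P (\<lambda>\<omega>. (Ys m \<omega>)\<^sup>2)
                   \<and> integrable P (\<lambda>\<omega>. (Ys m \<omega> - f (Sstar m)) ^ 4)"
    and meanY: "\<And>n. n \<ge> 1 \<Longrightarrow> prob_space.expectation P (Y n) = f (S n)"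
    and meanYs: "\<And>m. m \<in> {1..M} \<Longrightarrow> prob_space.expectation P (Ys m) = f (Sstar m)"
    and indep: "prob_space.indep_vars P (\<lambda>_. borel) (case_sum Y Ys) (Inl ` {1..} \<union> Inr ` {1..M})"
    (* (A3) *)
    and A3: "L-lipschitz_on UNIV f"
    (* (A4) *)
    and rho_range: "\<And>s. 0 \<le> rho2 s \<and> rho2 s \<le> BY"
    and varY: "\<And>n. n \<ge> 1 \<Longrightarrow> prob_space.variance P (Y n) = rho2 (S n)"
    and varYs: "\<And>m. m \<in> {1..M} \<Longrightarrow> prob_space.variance P (Ys m) = rho2 (Sstar m)"
    (* (A5) *)
    and A5: "continuous_on UNIV rho2"
    (* (A6) *)
    and alpha_range: "\<And>s. 0 \<le> alpha4 s \<and> alpha4 s \<le> C"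
    and m4Y: "\<And>n. n \<ge> 1 \<Longrightarrow> prob_space.expectation P (\<lambda>\<omega>. (Y n \<omega> - f (S n)) ^ 4) = alpha4 (S n)"
    and m4Ys: "\<And>m. m \<in> {1..M} \<Longrightarrow> prob_space.expectation P (\<lambda>\<omega>. (Ys m \<omega> - f (Sstar m)) ^ 4) = alpha4 (Sstar m)"
    (* adaptive number of neighbours *)
    and a_pos: "\<And>t. t \<ge> 1 \<Longrightarrow> a t > 0"
    and a_lim: "a \<longlonglongrightarrow> 0"
    and k1: "k 1 = 1"
    and kstep: "\<And>N. N \<ge> 1 \<Longrightarrow> k (Suc N) =
        (if Rdist S Sstar M (Suc N) (k N + 1) \<le> a (k N) then k N + 1 else k N)"
    (* nearest-neighbour sets, ties broken uniformly at random *)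
    and nb_meas: "\<And>N m. nb N m \<in> measurable P (count_space UNIV)"
    and nb_valid: "\<And>N m \<omega>. N \<ge> 1 \<Longrightarrow> m \<in> {1..M} \<Longrightarrow> \<omega> \<in> space P \<Longrightarrow>
        nb N m \<omega> \<in> knn_sets S (Sstar m) N (k N)"
    and nb_unif: "\<And>N m A. N \<ge> 1 \<Longrightarrow> m \<in> {1..M} \<Longrightarrow> A \<in> knn_sets S (Sstar m) N (k N) \<Longrightarrow>
        measure P {\<omega> \<in> space P. nb N m \<omega> = A} = 1 / real (card (knn_sets S (Sstar m) N (k N)))"
    (* zeta^N(n): a nearest neighbour of S n among the other training points *)
    and z_meas: "\<And>N n. z N n \<in> measurable P (count_space UNIV)"
    and z_valid: "\<And>N n \<omega>. N \<ge> 2 \<Longrightarrow> n \<in> {1..N} \<Longrightarrow> \<omega> \<in> space P \<Longrightarrow> z N n \<omega> \<in> nn_idx S N n"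
    (* tie-breaking is independent of the responses *)
    and tie_indep: "prob_space.indep_set P
        {(\<lambda>\<omega>. \<lambda>i\<in>Inl ` {1..} \<union> Inr ` {1..M}. case_sum Y Ys i \<omega>) -` E \<inter> space P | E.
           E \<in> sets (Pi\<^sub>M (Inl ` {1..} \<union> Inr ` {1..M}) (\<lambda>_. borel))}
        {(\<lambda>\<omega>. (\<lambda>N m. nb N m \<omega>, \<lambda>N n. z N n \<omega>)) -` F \<inter> space P | F.
           F \<in> sets (Pi\<^sub>M UNIV (\<lambda>N. Pi\<^sub>M UNIV (\<lambda>m. count_space UNIV)) \<Otimes>\<^sub>M
                      Pi\<^sub>M UNIV (\<lambda>N. Pi\<^sub>M UNIV (\<lambda>n. count_space UNIV)))}"
  shows "\<And>m m' \<epsilon>. m \<in> {1..M} \<Longrightarrow> m' \<in> {1..M} \<Longrightarrow> \<epsilon> > 0 \<Longrightarrow>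
      (\<lambda>N. measure P {\<omega> \<in> space P.
          \<bar>kPLP k (\<lambda>N m. nb N m \<omega>) (\<lambda>N n. z N n \<omega>) (\<lambda>n. Y n \<omega>) N m m'
           - (if m = m' then prob_space.variance P (Ys m) else 0)\<bar> > \<epsilon>})
      \<longlonglongrightarrow> 0"
proof -
  fix m m' :: nat and \<epsilon> :: real
  assume m: "m \<in> {1..M}" and m': "m' \<in> {1..M}" and \<epsilon>: "\<epsilon> > 0"
  obtain K where K: "\<And>(X :: (real ^ 'd) set) y. finite X \<Longrightarrow> y \<notin> X \<Longrightarrow>
      (\<forall>x\<in>X. \<forall>x'\<in>X. x' \<noteq> x \<longrightarrow> dist x y \<le> dist x x') \<Longrightarrow> card X \<le> K"
    using nn_indegree_bounded by blast
  have "1 \<le> M" using m by simp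
  interpret knn_estimator S Sstar M a k P Y Ys f rho2 alpha4 C L K nb z
    by (intro knn_estimator.intro adaptive_knn.intro training_responses.intro
        training_responses_axioms.intro knn_estimator_axioms.intro)
       (fact \<open>1 \<le> M\<close> P infill rvY intY meanY indep varY alpha_range m4Y a_pos a_lim k1 kstep K
         dist_targets dist_train A3 A5 nb_valid z_valid tie_indep)+
  show "(\<lambda>N. measure P {\<omega> \<in> space P.
      \<bar>kPLP k (\<lambda>N m. nb N m \<omega>) (\<lambda>N n. z N n \<omega>) (\<lambda>n. Y n \<omega>) N m m'
       - (if m = m' then prob_space.variance P (Ys m) else 0)\<bar> > \<epsilon>}) \<longlonglongrightarrow> 0"
    unfolding varYs[OF m] using estimate_tendsto[OF m m' \<epsilon>] by (simp only: estimate_def)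
qed

end
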